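(* Let $\mathcal H$ be the cyclotomic Hecke algebra (Ariki–Koike algebra) defined in the context, and let $T_0,T_1,\dots,T_{n-1}\in\mathrm{End}_{\mathbb K}(V^{\otimes n})$ be the operators defined in the context. Then there is a (unique) $\mathbb K$-algebra homomorphism $\Phi:\mathcal H\to\mathrm{End}_{\mathbb K}(V^{\otimes n})$ with $\Phi(g_a)=T_a$ for $a=0,1,\dots,n-1$; that is, $g_a\mapsto T_a$ defines a (super) representation of $\mathcal H$ on $V^{\otimes n}$.
   Context: Let $m,n\ge 1$ and $\mathbb K=\mathbb C(q,Q_1,\dots,Q_m)$, the field of rational functions in indeterminates $q,Q_1,\dots,Q_m$. The cyclotomic Hecke algebra $\mathcal H$ of type $G(m,1,n)$ is the unital associative $\mathbb K$-algebra generated by $g_0,g_1,\dots,g_{n-1}$ subject to: $(g_0-Q_1)\cdots(g_0-Q_m)=0$; $g_0g_1g_0g_1=g_1g_0g_1g_0$; $g_i^2=(q-q^{-1})g_i+1$ for $1\le i\le n-1$; $g_ig_j=g_jg_i$ for $0\le i,j\le n-1$ with $|i-j|\ge 2$; $g_ig_{i+1}g_i=g_{i+1}g_ig_{i+1}$ for $1\le i\le n-2$. Fix nonnegative integers $k_1,\dots,k_m,\ell_1,\dots,\ell_m$ with $N=\sum_{c=1}^m(k_c+\ell_c)>0$. Let $V$ be a $\mathbb K$-superspace with homogeneous basis $\{v^{(c)}_a:1\le c\le m,\ 1\le a\le k_c+\ell_c\}$, where $v^{(c)}_a$ is even if $a\le k_c$ and odd if $a>k_c$; $v^{(c)}_a$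 is said to have colour $c$. Totally order this basis by $v^{(c)}_a<v^{(c')}_b$ iff $c<c'$, or $c=c'$ and $a<b$, and write it as $u_1<u_2<\cdots<u_N$. Let $\bar j\in\{0,1\}$ denote the parity of $u_j$ and $\mathrm{col}(j)$ its colour. For $\mathbf i=(i_1,\dots,i_n)\in\{1,\dots,N\}^n$ we also write $\mathbf i$ for the basis vector $u_{i_1}\otimes\cdots\otimes u_{i_n}$ of $V^{\otimes n}$, put $c_t(\mathbf i)=\mathrm{col}(i_t)$, and for $1\le a\le n-1$ let $\mathbf i s_a$ be $\mathbf i$ with the $a$-th and $(a+1)$-th entries interchanged. Define $\mathbb K$-linear operators on $V^{\otimes n}$ on basis vectors by: $s_a(\mathbf i)=(-1)^{\bar i_a}\mathbf i$ if $i_a=i_{a+1}$, and $s_a(\mathbf i)=(-1)^{\bar i_a\bar i_{a+1}}\mathbf i s_a$ if $i_a\ne i_{a+1}$; $T_a(\mathbf i)=(q-q^{-1})\mathbf i+(-1)^{\bar i_a\bar i_{a+1}}\mathbf i s_a$ if $i_a<i_{a+1}$; $T_a(\mathbf i)=\frac{(q-q^{-1})+(-1)^{\bar i_a}(q+q^{-1})}{2}\mathbf i$ if $i_a=i_{a+1}$; $T_a(\mathbf i)=(-1)^{\bar i_a\bar i_{a+1}}\mathbf i s_a$ if $i_a>i_{a+1}$; $S_a(\mathbf i)=T_a(\mathbf i)$ if $c_a(\mathbf i)=c_{a+1}(\mathbf i)$ and $S_a(\mathbf i)=s_a(\mathbf i)$ otherwise; $S_0(\mathbf i)=Q_{c_1(\mathbf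 i)}\mathbf i$; $\theta=S_{n-1}\cdots S_1$ (composition of operators); and $T_0=T_1^{-1}\cdots T_{n-1}^{-1}\,\theta\, S_0$ (each $T_a$, $1\le a\le n-1$, is invertible). *)

theory Defs
  imports Complex_Main "HOL-Library.Poly_Mapping" "HOL-Computational_Algebra.Fraction_Field"
begin

text \<open>Multivariate polynomials over the complex numbers in indeterminates x_0, x_1, x_2, ...
  (monomials are finitely supported exponent vectors), and their fraction field.\<close>

type_synonym mpoly = "(nat \<Rightarrow>\<^sub>0 nat) \<Rightarrow>\<^sub>0 complex"
type_synonym K = "mpoly fract"

definition indet :: "nat \<Rightarrow> K" where
  "indet i = Fract (Poly_Mapping.single (Poly_Mapping.single i 1) 1) 1"

definition qq :: K where "qq = indet 0"

definition QQ :: "nat \<Rightarrow> K" where "QQ c = indet c"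

text \<open>The basis vector v^(c)_a is represented by the pair (c, a), with 1 \<le> c \<le> m and
  1 \<le> a \<le> k c + l c.  A basis vector of the n-fold tensor power is a list of length n
  of such pairs.  k c, l c are k_c, l_c.\<close>

type_synonym idx = "(nat \<times> nat) list"

definition basis :: "nat \<Rightarrow> nat \<Rightarrow> (nat \<Rightarrow> nat) \<Rightarrow> (nat \<Rightarrow> nat) \<Rightarrow> idx set" where
  "basis m n k l = {i. length i = n \<and>
      (\<forall>x\<in>set i. 1 \<le> fst x \<and> fst x \<le> m \<and> 1 \<le> snd x \<and> snd x \<le> k (fst x) + l (fst x))}"

definition odd_vec :: "(nat \<Rightarrow> nat) \<Rightarrow> nat \<times> nat \<Rightarrow> bool" where
  "odd_vec k x = (snd x > k (fst x))"

definition vless :: "nat \<times> nat \<Rightarrow> nat \<times> nat \<Rightarrow> bool" where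
  "vless x y = (fst x < fst y \<or> (fst x = fst y \<and> snd x < snd y))"

definition sgn_of :: "bool \<Rightarrow> K" where
  "sgn_of b = (if b then -1 else 1)"

text \<open>interchange the a-th and (a+1)-th entries (1-based positions)\<close>
definition swp :: "idx \<Rightarrow> nat \<Rightarrow> idx" where
  "swp i a = i[a - 1 := i ! a, a := i ! (a - 1)]"

text \<open>An operator A is represented by its matrix w.r.t. the basis: A i j is the
  coefficient of the basis vector j in A(i).\<close>

type_synonym op = "idx \<Rightarrow> idx \<Rightarrow> K"

definition op_id :: op where
  "op_id i j = (if i = j then 1 else 0)"

text \<open>ocomp B A is the composition B \<circ> A (first A, then B).\<close>
definition ocomp :: "idx set \<Rightarrow> op \<Rightarrow> op \<Rightarrow> op" where
  "ocomp Bs B A i j = (\<Sum>r\<in>Bs. A i r * B r j)"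

fun ocomps :: "idx set \<Rightarrow> op list \<Rightarrow> op" where
  "ocomps Bs [] = op_id"
| "ocomps Bs (A # As) = ocomp Bs A (ocomps Bs As)"

definition oadd :: "op \<Rightarrow> op \<Rightarrow> op" where
  "oadd A B i j = A i j + B i j"

definition osmult :: "K \<Rightarrow> op \<Rightarrow> op" where
  "osmult c A i j = c * A i j"

definition oeq :: "idx set \<Rightarrow> op \<Rightarrow> op \<Rightarrow> bool" where
  "oeq Bs A B = (\<forall>i\<in>Bs. \<forall>j\<in>Bs. A i j = B i j)"

definition oinv :: "idx set \<Rightarrow> op \<Rightarrow> op" where
  "oinv Bs A = (THE S. (\<forall>i j. i \<notin> Bs \<or> j \<notin> Bs \<longrightarrow> S i j = 0) \<and>
                       oeq Bs (ocomp Bs S A) op_id \<and> oeq Bs (ocomp Bs A S) op_id)"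

definition s_op :: "(nat \<Rightarrow> nat) \<Rightarrow> nat \<Rightarrow> op" where
  "s_op k a i j =
     (let x = i ! (a - 1); y = i ! a in
      if x = y then (if j = i then sgn_of (odd_vec k x) else 0)
      else (if j = swp i a then sgn_of (odd_vec k x \<and> odd_vec k y) else 0))"

definition T_op :: "(nat \<Rightarrow> nat) \<Rightarrow> nat \<Rightarrow> op" where
  "T_op k a i j =
     (let x = i ! (a - 1); y = i ! a in
      if vless x y then
        (if j = i then qq - inverse qq else 0)
        + (if j = swp i a then sgn_of (odd_vec k x \<and> odd_vec k y) else 0)
      else if x = y then
        (if j = i then ((qq - inverse qq) + sgn_of (odd_vec k x) * (qq + inverse qq)) / 2 else 0)
      else (if j = swp i a then sgn_of (odd_vec k x \<and> odd_vec k y) else 0))"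

definition S_op :: "(nat \<Rightarrow> nat) \<Rightarrow> nat \<Rightarrow> op" where
  "S_op k a i j =
     (if fst (i ! (a - 1)) = fst (i ! a) then T_op k a i j else s_op k a i j)"

definition S0_op :: op where
  "S0_op i j = (if j = i then QQ (fst (i ! 0)) else 0)"

definition theta_op :: "idx set \<Rightarrow> nat \<Rightarrow> (nat \<Rightarrow> nat) \<Rightarrow> op" where
  "theta_op Bs n k = ocomps Bs (map (S_op k) (rev [1..<n]))"

definition T0_op :: "idx set \<Rightarrow> nat \<Rightarrow> (nat \<Rightarrow> nat) \<Rightarrow> op" where
  "T0_op Bs n k = ocomps Bs (map (\<lambda>a. oinv Bs (T_op k a)) [1..<n] @ [theta_op Bs n k, S0_op])"

definition TT :: "idx set \<Rightarrow> nat \<Rightarrow> (nat \<Rightarrow> nat) \<Rightarrow> nat \<Rightarrow> op" where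
  "TT Bs n k a = (if a = 0 then T0_op Bs n k else T_op k a)"

end

theory Submission
  imports Defs
begin

text \<open>
  Each T_a with a \<ge> 1 acts only on the tensor positions a and a+1, mapping a basis vector
  to a combination of itself and its transposition; the quadratic and braid relations for
  T_1, ..., T_{n-1} are therefore identities between coefficients on two or three positions,
  checked by a case distinction on the order of the entries.

  For T_0 = T_1^{-1}...T_{n-1}^{-1} \<theta> S_0 everything is reduced to rewriting words in the
  generators: \<theta> conjugates T_{b-1} into T_b, S_0 commutes with every operator that does not
  touch the first position, and T_{b-1}^{-1} is pushed through T_1^{-1}...T_{n-1}^{-1} by the
  braid relation.  This gives T_0 T_b = T_b T_0 for b \<ge> 2, and together with
  (\<theta> S_0)^2 T_1 = T_{n-1} (\<theta> S_0)^2 the relation T_0 T_1 T_0 T_1 = T_1 T_0 T_1 T_0.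

  For the cyclotomic relation, T_1^{-1}...T_{n-1}^{-1} \<theta> is unitriangular with respect to the
  colour of the first tensor factor: T_j^{-1} S_j is the identity up to q - q^{-1} times an
  operator that only acts where the colour rises, and after conjugation by \<theta> this raises
  the first colour.  Hence T_0 is triangular with diagonal entries Q_{c_1(i)}, and the product
  of the T_0 - Q_c over all colours c vanishes.
\<close>

section \<open>Matrices acting on coefficient vectors\<close>

lemma two_neq_zero: "(2::K) \<noteq> 0"
proof -
  have e: "(2::K) = Fract (of_nat 2) 1" by (metis of_nat_fract of_nat_numeral)
  have "(of_nat 2 :: mpoly) \<noteq> 0" by (metis of_nat_eq_0_iff zero_neq_numeral)
  then show ?thesis unfolding e by (simp add: Zero_fract_def eq_fract)
qed

lemma qq_neq_zero: "qq \<noteq> 0"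
  unfolding qq_def indet_def
  by (simp add: Zero_fract_def eq_fract) (metis lookup_single_eq lookup_zero one_neq_zero)

definition qdiff :: K where "qdiff = qq - inverse qq"

definition op_act :: "idx set \<Rightarrow> op \<Rightarrow> (idx \<Rightarrow> K) \<Rightarrow> idx \<Rightarrow> K" where
  "op_act Bs A F i = (\<Sum>r\<in>Bs. A i r * F r)"

text \<open>The action on coefficient vectors is contravariant: the action of
  ocomps Bs [A_1, ..., A_k] is the action of A_1, followed by that of A_2, and so on.\<close>

definition sem :: "idx set \<Rightarrow> op \<Rightarrow> (idx \<Rightarrow> K) \<Rightarrow> idx \<Rightarrow> K" where
  "sem Bs A F i = (if i \<in> Bs then op_act Bs A F i else 0)"

definition restrict_to :: "idx set \<Rightarrow> (idx \<Rightarrow> K) \<Rightarrow> idx \<Rightarrow> K" where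
  "restrict_to Bs F i = (if i \<in> Bs then F i else 0)"

lemma op_act_two_terms:
  assumes "finite Bs" "i \<in> Bs" "i' \<in> Bs"
    and A: "\<And>r. r \<in> Bs \<Longrightarrow> A i r = (if r = i then \<alpha> else 0) + (if r = i' then \<beta> else 0)"
  shows "op_act Bs A F i = \<alpha> * F i + \<beta> * F i'"
proof -
  have "op_act Bs A F i = (\<Sum>r\<in>Bs. (if r = i then \<alpha> * F r else 0) + (if r = i' then \<beta> * F r else 0))"
    unfolding op_act_def by (rule sum.cong) (auto simp: A distrib_right)
  also have "\<dots> = \<alpha> * F i + \<beta> * F i'"
    using assms(1-3) by (simp add: sum.distrib)
  finally show ?thesis .
qed

lemma op_act_ocomp: "op_act Bs (ocomp Bs B A) F i = op_act Bs A (op_act Bs B F) i"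
proof -
  have "op_act Bs (ocomp Bs B A) F i = (\<Sum>r\<in>Bs. \<Sum>s\<in>Bs. A i s * B s r * F r)"
    unfolding op_act_def ocomp_def by (simp add: sum_distrib_right)
  also have "\<dots> = (\<Sum>s\<in>Bs. \<Sum>r\<in>Bs. A i s * B s r * F r)"
    by (rule sum.swap)
  also have "\<dots> = op_act Bs A (op_act Bs B F) i"
    unfolding op_act_def by (simp add: sum_distrib_left mult.assoc)
  finally show ?thesis .
qed

lemma sem_ocomp: "sem Bs (ocomp Bs B A) = sem Bs A \<circ> sem Bs B"
proof (intro ext)
  fix F i
  show "sem Bs (ocomp Bs B A) F i = (sem Bs A \<circ> sem Bs B) F i"
    unfolding sem_def comp_def op_act_ocomp by (simp add: op_act_def cong: sum.cong)
qed

lemma sem_op_id: "finite Bs \<Longrightarrow> sem Bs op_id = restrict_to Bs"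
proof (intro ext)
  fix F i assume "finite Bs"
  have "(\<Sum>r\<in>Bs. op_id i r * F r) = (\<Sum>r\<in>Bs. if r = i then F r else 0)"
    by (rule sum.cong) (auto simp: op_id_def)
  with \<open>finite Bs\<close> show "sem Bs op_id F i = restrict_to Bs F i"
    by (simp add: sem_def op_act_def restrict_to_def)
qed

lemma restrict_to_in [simp]: "i \<in> Bs \<Longrightarrow> restrict_to Bs G i = G i"
  by (simp add: restrict_to_def)

lemma sem_restrict: "sem Bs A \<circ> restrict_to Bs = sem Bs A"
  by (intro ext) (simp add: sem_def op_act_def restrict_to_def cong: sum.cong)

lemma sem_restrict_arg: "sem Bs A (restrict_to Bs G) = sem Bs A G"
  using sem_restrict[of Bs A] by (simp add: fun_eq_iff)

lemma restrict_sem: "restrict_to Bs \<circ> sem Bs A = sem Bs A"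
  by (intro ext) (simp add: sem_def restrict_to_def)

lemma sem_oadd: "sem Bs (oadd A B) G r = sem Bs A G r + sem Bs B G r"
  unfolding sem_def op_act_def oadd_def by (simp add: distrib_right sum.distrib)

lemma sem_osmult: "sem Bs (osmult c A) G r = c * sem Bs A G r"
  unfolding sem_def op_act_def osmult_def by (simp add: sum_distrib_left mult.assoc)

lemma sem_linear: "sem Bs A (\<lambda>r. G1 r + c * G2 r) i = sem Bs A G1 i + c * sem Bs A G2 i"
  unfolding sem_def op_act_def by (simp add: sum.distrib sum_distrib_left algebra_simps)

lemma sem_unit_vector:
  "finite Bs \<Longrightarrow> i \<in> Bs \<Longrightarrow> r \<in> Bs \<Longrightarrow> sem Bs A (\<lambda>s. if s = r then 1 else 0) i = A i r"
  by (simp add: sem_def op_act_def if_distrib cong: if_cong)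

lemma oeq_iff_sem_eq: "finite Bs \<Longrightarrow> oeq Bs A B \<longleftrightarrow> sem Bs A = sem Bs B"
  by (auto simp: oeq_def fun_eq_iff sem_def op_act_def simp flip: sem_unit_vector)

section \<open>The local coefficients of T_a, s_a and S_a\<close>

lemma vless_irrefl [simp]: "\<not> vless x x"
  by (simp add: vless_def)

lemma vless_trans: "vless x y \<Longrightarrow> vless y z \<Longrightarrow> vless x z"
  by (auto simp: vless_def)

lemma vless_asym: "vless x y \<Longrightarrow> \<not> vless y x \<and> x \<noteq> y \<and> y \<noteq> x"
  by (auto simp: vless_def)

lemma vless_linear: "x \<noteq> y \<Longrightarrow> \<not> vless x y \<Longrightarrow> vless y x"
  by (cases x, cases y) (auto simp: vless_def)

lemma vless_fst: "vless x y \<Longrightarrow> fst x \<le> fst y"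
  by (auto simp: vless_def)

lemma vless_cases2:
  obtains "x = y" | "vless x y" "fst x \<le> fst y" | "vless y x" "fst y \<le> fst x"
  by (metis vless_linear vless_fst)

lemma vless_cases3_plain:
  obtains "x = y" "y = z" | "x = y" "vless y z" | "x = y" "vless z y"
  | "y = z" "vless x y" | "y = z" "vless y x" | "x = z" "vless x y" | "x = z" "vless y x"
  | "vless x y" "vless y z" "vless x z" | "vless x z" "vless z y" "vless x y"
  | "vless y x" "vless x z" "vless y z" | "vless y z" "vless z x" "vless y x"
  | "vless z x" "vless x y" "vless z y" | "vless z y" "vless y x" "vless z x"
  by (metis vless_linear vless_trans)

lemma vless_cases3:
  obtains "x = y" "y = z"
  | "x = y" "vless y z" "fst y \<le> fst z"
  | "x = y" "vless z y" "fst z \<le> fst y"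
  | "y = z" "vless x y" "fst x \<le> fst y"
  | "y = z" "vless y x" "fst y \<le> fst x"
  | "x = z" "vless x y" "fst x \<le> fst y"
  | "x = z" "vless y x" "fst y \<le> fst x"
  | "vless x y" "vless y z" "vless x z" "fst x \<le> fst y" "fst y \<le> fst z"
  | "vless x z" "vless z y" "vless x y" "fst x \<le> fst z" "fst z \<le> fst y"
  | "vless y x" "vless x z" "vless y z" "fst y \<le> fst x" "fst x \<le> fst z"
  | "vless y z" "vless z x" "vless y x" "fst y \<le> fst z" "fst z \<le> fst x"
  | "vless z x" "vless x y" "vless z y" "fst z \<le> fst x" "fst x \<le> fst y"
  | "vless z y" "vless y x" "vless z x" "fst z \<le> fst y" "fst y \<le> fst x"
  by (cases x y z rule: vless_cases3_plain) (simp_all add: vless_fst)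

definition diag_coeff :: "(nat \<Rightarrow> nat) \<Rightarrow> nat \<times> nat \<Rightarrow> K" where
  "diag_coeff k x = (if odd_vec k x then - inverse qq else qq)"

definition T_coeff :: "(nat \<Rightarrow> nat) \<Rightarrow> nat \<times> nat \<Rightarrow> nat \<times> nat \<Rightarrow> K" where
  "T_coeff k x y = (if vless x y then qdiff else if x = y then diag_coeff k x else 0)"

definition s_coeff :: "(nat \<Rightarrow> nat) \<Rightarrow> nat \<times> nat \<Rightarrow> nat \<times> nat \<Rightarrow> K" where
  "s_coeff k x y = (if x = y then sgn_of (odd_vec k x) else 0)"

definition S_coeff :: "(nat \<Rightarrow> nat) \<Rightarrow> nat \<times> nat \<Rightarrow> nat \<times> nat \<Rightarrow> K" where
  "S_coeff k x y = (if fst x = fst y then T_coeff k x y else s_coeff k x y)"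

definition swap_coeff :: "(nat \<Rightarrow> nat) \<Rightarrow> nat \<times> nat \<Rightarrow> nat \<times> nat \<Rightarrow> K" where
  "swap_coeff k x y = (if x = y then 0 else sgn_of (odd_vec k x \<and> odd_vec k y))"

lemma swp_same: "i ! (a - 1) = i ! a \<Longrightarrow> swp i a = i"
  unfolding swp_def by (metis list_update_id)

lemma T_op_diag_value:
  "((qq - inverse qq) + sgn_of b * (qq + inverse qq)) / 2 = (if b then - inverse qq else qq)"
  using two_neq_zero by (auto simp: sgn_of_def field_simps)

lemma T_op_two_terms:
  "T_op k a i j = (if j = i then T_coeff k (i!(a-1)) (i!a) else 0)
                + (if j = swp i a then swap_coeff k (i!(a-1)) (i!a) else 0)"
  unfolding T_op_def T_coeff_def swap_coeff_def Let_def T_op_diag_value diag_coeff_def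
  by (simp add: swp_same qdiff_def)

lemma s_op_two_terms:
  "s_op k a i j = (if j = i then s_coeff k (i!(a-1)) (i!a) else 0)
                + (if j = swp i a then swap_coeff k (i!(a-1)) (i!a) else 0)"
  unfolding s_op_def s_coeff_def swap_coeff_def Let_def by (simp add: swp_same)

lemma S_op_two_terms:
  "S_op k a i j = (if j = i then S_coeff k (i!(a-1)) (i!a) else 0)
                + (if j = swp i a then swap_coeff k (i!(a-1)) (i!a) else 0)"
  unfolding S_op_def S_coeff_def T_op_two_terms s_op_two_terms by auto

lemma S_coeff_nonzero: "S_coeff k x y \<noteq> 0 \<Longrightarrow> fst x = fst y"
  by (auto simp: S_coeff_def s_coeff_def split: if_splits)

lemma sgn_of_sq: "sgn_of b * sgn_of b = 1"
  by (simp add: sgn_of_def)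

lemma sgn_of_sq_left: "sgn_of b * (sgn_of b * z) = (z::K)"
  by (simp add: sgn_of_def)

lemma diag_coeff_quadratic: "diag_coeff k x * diag_coeff k x = qdiff * diag_coeff k x + 1"
proof -
  have "qq * inverse qq = 1" using qq_neq_zero by simp
  then show ?thesis
    unfolding diag_coeff_def qdiff_def by (cases "odd_vec k x") (simp_all add: algebra_simps)
qed

lemma diag_coeff_quadratic_left:
  "diag_coeff k x * (diag_coeff k x * z) = qdiff * (diag_coeff k x * z) + z"
proof -
  have "diag_coeff k x * (diag_coeff k x * z) = (diag_coeff k x * diag_coeff k x) * z"
    by (simp add: mult.assoc)
  also have "\<dots> = qdiff * (diag_coeff k x * z) + z"
    by (simp add: diag_coeff_quadratic algebra_simps)
  finally show ?thesis .
qed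

lemmas coeff_defs = S_coeff_def s_coeff_def T_coeff_def swap_coeff_def vless_asym

lemmas coeff_arith = algebra_simps sgn_of_sq sgn_of_sq_left
  diag_coeff_quadratic diag_coeff_quadratic_left conj_commute conj_left_commute

lemma length_swp [simp]: "length (swp i a) = length i"
  by (simp add: swp_def)

lemma swp_append: "length pre = a - 1 \<Longrightarrow> 1 \<le> a \<Longrightarrow> swp (pre @ x # y # rest) a = pre @ y # x # rest"
  unfolding swp_def by (cases a) (auto simp: nth_append list_update_append)

lemma swp_append_second:
  "length pre = a - 1 \<Longrightarrow> 1 \<le> a \<Longrightarrow> swp (pre @ x # y # z # post) (Suc a) = pre @ x # z # y # post"
  using swp_append[of "pre @ [x]" "Suc a" y z post] by simp

lemma nth_append_sites:
  "length pre = a - 1 \<Longrightarrow> 1 \<le> a \<Longrightarrow>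
   (pre @ x # rest) ! (a - Suc 0) = x \<and> (pre @ x # y # rest) ! a = y \<and> (pre @ x # y # z # rest) ! Suc a = z"
  by (cases a) (auto simp: nth_append)

lemma nth_swp:
  "1 \<le> a \<Longrightarrow> a < length i \<Longrightarrow> swp i a ! p = (if p = a then i!(a-1) else if p = a-1 then i!a else i!p)"
  unfolding swp_def by (auto simp: nth_list_update)

lemma nth_swp_other: "p \<noteq> b - 1 \<Longrightarrow> p \<noteq> b \<Longrightarrow> swp i b ! p = i ! p"
  unfolding swp_def by (simp add: nth_list_update)

lemma swp_commute: "1 \<le> a \<Longrightarrow> a + 2 \<le> b \<Longrightarrow> swp (swp i a) b = swp (swp i b) a"
  unfolding swp_def by (simp add: nth_list_update list_update_swap)

lemma set_swp: "1 \<le> a \<Longrightarrow> a < length i \<Longrightarrow> set (swp i a) \<subseteq> set i"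
proof -
  assume a: "1 \<le> a" "a < length i"
  have m: "i!a \<in> set i" "i!(a-1) \<in> set i" using a by auto
  have "set (i[a-1 := i!a]) \<subseteq> set i"
    using set_update_subset_insert[of i "a-1" "i!a"] m by auto
  moreover have "set (i[a-1 := i!a, a := i!(a-1)]) \<subseteq> insert (i!(a-1)) (set (i[a-1 := i!a]))"
    by (rule set_update_subset_insert)
  ultimately show ?thesis unfolding swp_def using m by auto
qed

lemma map_fst_swp_same:
  "1 \<le> a \<Longrightarrow> a < length i \<Longrightarrow> fst (i!(a-1)) = fst (i!a) \<Longrightarrow> map fst (swp i a) = map fst i"
  by (rule nth_equalityI) (auto simp: nth_swp)

lemma map_fst_swp_cong:
  assumes e: "map fst i = map fst i'" and "a < length i"
  shows "map fst (swp i a) = map fst (swp i' a)"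
proof -
  have l: "length i = length i'" using e by (metis length_map)
  have "fst (i!p) = fst (i'!p)" if "p < length i" for p using e l that by (metis nth_map)
  then show ?thesis
    unfolding swp_def using assms l by (intro nth_equalityI) (auto simp: nth_list_update)
qed

lemma upt_split3: "1 \<le> a \<Longrightarrow> Suc a < j \<Longrightarrow> [1..<j] = [1..<a] @ a # Suc a # [Suc (Suc a)..<j]"
proof -
  assume h: "1 \<le> a" "Suc a < j"
  have "[1..<j] = [1..<a] @ [a..<j]" using upt_add_eq_append[of 1 a "j - a"] h by simp
  also have "[a..<j] = a # Suc a # [Suc (Suc a)..<j]" using h by (simp add: upt_conv_Cons)
  finally show ?thesis .
qed

definition diag_op :: "(idx \<Rightarrow> K) \<Rightarrow> op" where
  "diag_op f i j = (if j = i then f i else 0)"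

definition colour_rise :: "nat \<Rightarrow> op" where
  "colour_rise a = diag_op (\<lambda>i. if fst (i!(a-1)) < fst (i!a) then 1 else 0)"

locale swap_closed =
  fixes Bs :: "idx set" and n :: nat and k :: "nat \<Rightarrow> nat"
  assumes finite_Bs: "finite Bs"
    and length_Bs: "i \<in> Bs \<Longrightarrow> length i = n"
    and swp_in_Bs: "i \<in> Bs \<Longrightarrow> 1 \<le> a \<Longrightarrow> a < n \<Longrightarrow> swp i a \<in> Bs"
begin

abbreviation "T_at a \<equiv> T_op k a"

abbreviation "S_at a \<equiv> S_op k a"
abbreviation "T0 \<equiv> T0_op Bs n k"

text \<open>By the quadratic relation T_a^{-1} = T_a - (q - q^{-1}); restricting to Bs makes this
  the operator chosen by oinv.\<close>

definition Tinv :: "nat \<Rightarrow> op" where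
  "Tinv a i j = (if i \<in> Bs \<and> j \<in> Bs then T_at a i j - (if i = j then qdiff else 0) else 0)"

definition word_eq :: "op list \<Rightarrow> op list \<Rightarrow> bool" where
  "word_eq L1 L2 \<longleftrightarrow> sem Bs (ocomps Bs L1) = sem Bs (ocomps Bs L2)"

lemma sem_outside: "i \<notin> Bs \<Longrightarrow> sem Bs A F i = 0"
  by (simp add: sem_def)

lemma sem_Cons: "sem Bs (ocomps Bs (A # As)) F = sem Bs (ocomps Bs As) (sem Bs A F)"
  by (simp add: sem_ocomp)

lemma sem_Nil: "sem Bs (ocomps Bs []) F i = (if i \<in> Bs then F i else 0)"
  by (simp add: sem_op_id finite_Bs restrict_to_def)

lemma sem_append: "sem Bs (ocomps Bs (xs @ ys)) F = sem Bs (ocomps Bs ys) (sem Bs (ocomps Bs xs) F)"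
proof (induction xs arbitrary: F)
  case Nil
  show ?case by (simp add: sem_op_id finite_Bs sem_restrict_arg)
next
  case (Cons a xs)
  then show ?case by (simp add: sem_ocomp)
qed

lemma word_eqI:
  "(\<And>F i. i \<in> Bs \<Longrightarrow> sem Bs (ocomps Bs L1) F i = sem Bs (ocomps Bs L2) F i) \<Longrightarrow> word_eq L1 L2"
  unfolding word_eq_def by (intro ext) (metis sem_outside)

lemma word_eq_refl [simp]: "word_eq L L"
  by (simp add: word_eq_def)

lemma word_eq_sym: "word_eq L1 L2 \<Longrightarrow> word_eq L2 L1"
  by (simp add: word_eq_def)

lemma word_eq_trans [trans]: "word_eq L1 L2 \<Longrightarrow> word_eq L2 L3 \<Longrightarrow> word_eq L1 L3"
  by (simp add: word_eq_def)

lemma word_eq_append: "word_eq A B \<Longrightarrow> word_eq C D \<Longrightarrow> word_eq (A @ C) (B @ D)"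
  unfolding word_eq_def by (rule ext) (simp add: sem_append)

lemma word_eq_appendL: "word_eq C D \<Longrightarrow> word_eq (A @ C) (A @ D)"
  by (simp add: word_eq_append)

lemma word_eq_appendR: "word_eq A B \<Longrightarrow> word_eq (A @ C) (B @ C)"
  by (simp add: word_eq_append)

lemma word_eq_middle: "word_eq C D \<Longrightarrow> word_eq (A @ C @ E) (A @ D @ E)"
  by (simp add: word_eq_append)

lemma word_eq_Cons: "word_eq L1 L2 \<Longrightarrow> word_eq (a # L1) (a # L2)"
  using word_eq_appendL[of L1 L2 "[a]"] by simp

lemma word_eq_replace: "word_eq C D \<Longrightarrow> A @ C @ E = X \<Longrightarrow> A @ D @ E = Y \<Longrightarrow> word_eq X Y"
  using word_eq_middle by blast

lemma word_eq_cancel: "word_eq C [] \<Longrightarrow> A @ C @ E = X \<Longrightarrow> A @ E = Y \<Longrightarrow> word_eq X Y"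
  using word_eq_middle[of C "[]" A E] by simp

lemma word_eq_move_front: "(\<And>x. x \<in> set L \<Longrightarrow> word_eq [a, x] [x, a]) \<Longrightarrow> word_eq (a # L) (L @ [a])"
proof (induction L)
  case Nil then show ?case by simp
next
  case (Cons x L)
  have "word_eq (a # x # L) (x # a # L)" using word_eq_appendR[OF Cons.prems[of x], of L] by simp
  also have "word_eq (x # a # L) (x # (L @ [a]))" using Cons by (intro word_eq_Cons) auto
  finally show ?case by simp
qed

lemma word_eq_move_back: "(\<And>x. x \<in> set L \<Longrightarrow> word_eq [a, x] [x, a]) \<Longrightarrow> word_eq (L @ [a]) (a # L)"
  using word_eq_move_front word_eq_sym by blast

lemma word_eq_rev: "(\<And>x y. x \<in> set L \<Longrightarrow> y \<in> set L \<Longrightarrow> word_eq [x, y] [y, x]) \<Longrightarrow> word_eq L (rev L)"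
proof (induction L)
  case Nil then show ?case by simp
next
  case (Cons x L)
  have "word_eq (x # L) (L @ [x])" by (rule word_eq_move_front) (use Cons.prems in auto)
  also have "word_eq \<dots> (rev L @ [x])" by (rule word_eq_appendR[OF Cons.IH]) (use Cons.prems in auto)
  finally show ?case by simp
qed

lemma word_eq_oeq: "word_eq L1 L2 \<Longrightarrow> oeq Bs (ocomps Bs L1) (ocomps Bs L2)"
  unfolding word_eq_def using oeq_iff_sem_eq[OF finite_Bs] by simp

lemma word_eq_entry: "word_eq L1 L2 \<Longrightarrow> i \<in> Bs \<Longrightarrow> r \<in> Bs \<Longrightarrow> ocomps Bs L1 i r = ocomps Bs L2 i r"
  using word_eq_oeq by (auto simp: oeq_def)

lemma word_eq_ocomps_single: "word_eq [ocomps Bs L] L"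
  unfolding word_eq_def by (simp add: sem_ocomp sem_op_id finite_Bs restrict_sem)

lemma sem_ocomp_pair: "sem Bs (ocomp Bs A B) = sem Bs (ocomps Bs [A, B])"
  by (simp add: sem_ocomp sem_op_id finite_Bs restrict_sem comp_assoc)

lemma sem_single: "sem Bs (ocomps Bs [A]) = sem Bs A"
  by (simp add: sem_ocomp sem_op_id finite_Bs restrict_sem)

lemma oeq_ocomp_iff_word_eq: "oeq Bs (ocomp Bs A B) (ocomp Bs C D) \<longleftrightarrow> word_eq [A, B] [C, D]"
  unfolding word_eq_def oeq_iff_sem_eq[OF finite_Bs] sem_ocomp_pair ..

lemma shifted_ops_commute:
  "word_eq [oadd A (osmult c op_id), oadd A (osmult d op_id)]
     [oadd A (osmult d op_id), oadd A (osmult c op_id)]"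
proof (rule word_eqI)
  fix F i assume "i \<in> Bs"
  have shift: "sem Bs (oadd A (osmult c op_id)) G = (\<lambda>r. sem Bs A G r + c * restrict_to Bs G r)" for c G
    by (simp add: fun_eq_iff sem_oadd sem_osmult sem_op_id finite_Bs)
  show "sem Bs (ocomps Bs [oadd A (osmult c op_id), oadd A (osmult d op_id)]) F i
      = sem Bs (ocomps Bs [oadd A (osmult d op_id), oadd A (osmult c op_id)]) F i"
    using \<open>i \<in> Bs\<close>
    by (simp del: ocomps.simps add: sem_Cons sem_Nil shift sem_linear sem_restrict_arg algebra_simps)
qed

lemma sem_T_op: "1 \<le> a \<Longrightarrow> a < n \<Longrightarrow> i \<in> Bs \<Longrightarrow>
   sem Bs (T_at a) F i = T_coeff k (i!(a-1)) (i!a) * F i + swap_coeff k (i!(a-1)) (i!a) * F (swp i a)"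
  unfolding sem_def
    by (simp, rule op_act_two_terms[OF finite_Bs]) (auto simp: swp_in_Bs T_op_two_terms)

lemma sem_S_op: "1 \<le> a \<Longrightarrow> a < n \<Longrightarrow> i \<in> Bs \<Longrightarrow>
   sem Bs (S_at a) F i = S_coeff k (i!(a-1)) (i!a) * F i + swap_coeff k (i!(a-1)) (i!a) * F (swp i a)"
  unfolding sem_def
    by (simp, rule op_act_two_terms[OF finite_Bs]) (auto simp: swp_in_Bs S_op_two_terms)

lemma sem_Tinv: "1 \<le> a \<Longrightarrow> a < n \<Longrightarrow> i \<in> Bs \<Longrightarrow>
   sem Bs (Tinv a) F i = (T_coeff k (i!(a-1)) (i!a) - qdiff) * F i + swap_coeff k (i!(a-1)) (i!a) * F (swp i a)"
  unfolding sem_def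
    by (simp, rule op_act_two_terms[OF finite_Bs]) (auto simp: swp_in_Bs T_op_two_terms Tinv_def)

lemma sem_diag_op: "i \<in> Bs \<Longrightarrow> sem Bs (diag_op f) F i = f i * F i"
proof -
  assume "i \<in> Bs"
  have "(\<Sum>r\<in>Bs. diag_op f i r * F r) = (\<Sum>r\<in>Bs. if r = i then f i * F r else 0)"
    by (rule sum.cong) (auto simp: diag_op_def)
  with \<open>i \<in> Bs\<close> show ?thesis using finite_Bs by (simp add: sem_def op_act_def)
qed

lemma diag_op_cong: "(\<And>i. i \<in> Bs \<Longrightarrow> f i = g i) \<Longrightarrow> word_eq [diag_op f] [diag_op g]"
  by (rule word_eqI) (simp only: sem_Cons sem_Nil, simp add: sem_diag_op)

lemma diag_op_mult: "word_eq [diag_op f, diag_op g] [diag_op (\<lambda>i. f i * g i)]"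
  by (rule word_eqI) (simp only: sem_Cons sem_Nil, simp add: sem_diag_op)

section \<open>Relations on two and three adjacent positions\<close>

lemma two_site_frame:
  assumes "i \<in> Bs" "1 \<le> a" "a < n"
  obtains pre x y post
  where "i = pre @ x # y # post" "length pre = a - 1" "pre @ y # x # post \<in> Bs"
proof -
  have len: "length i = n" using assms length_Bs by simp
  define pre where "pre = take (a - 1) i"
  have lp: "length pre = a - 1" using assms len by (simp add: pre_def)
  have "drop (a - 1) i = i ! (a - 1) # drop (Suc (a - 1)) i"
    using assms len by (intro Cons_nth_drop_Suc[symmetric]) simp
  moreover have "drop a i = i ! a # drop (Suc a) i"
    using assms len by (simp add: Cons_nth_drop_Suc)
  ultimately have "drop (a - 1) i = i ! (a - 1) # i ! a # drop (Suc a) i"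
    using assms by simp
  then have i: "i = pre @ i ! (a - 1) # i ! a # drop (Suc a) i"
    by (metis append_take_drop_id pre_def)
  have "swp i a \<in> Bs" using swp_in_Bs assms by blast
  with i have "pre @ i ! a # i ! (a - 1) # drop (Suc a) i \<in> Bs"
    using swp_append[OF lp assms(2)] by metis
  with i lp show ?thesis by (rule that)
qed

lemma three_site_frame:
  assumes "i \<in> Bs" "1 \<le> a" "Suc a < n"
  obtains pre x y z post
  where "i = pre @ x # y # z # post" "length pre = a - 1"
    "pre @ y # x # z # post \<in> Bs" "pre @ x # z # y # post \<in> Bs" "pre @ y # z # x # post \<in> Bs"
    "pre @ z # x # y # post \<in> Bs" "pre @ z # y # x # post \<in> Bs"
proof -
  have a: "a < n" using assms by simp
  obtain pre x y yz where i: "i = pre @ x # y # yz" and lp: "length pre = a - 1"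
    using two_site_frame[OF assms(1,2) a] by metis
  have "length yz \<noteq> 0" using length_Bs[OF assms(1)] assms(2,3) i lp by auto
  then obtain z post where "yz = z # post" by (cases yz) auto
  with i have i: "i = pre @ x # y # z # post" by simp
  have first: "pre @ x' # y' # z' # post \<in> Bs \<Longrightarrow> pre @ y' # x' # z' # post \<in> Bs" for x' y' z'
    using swp_in_Bs[of "pre @ x' # y' # z' # post" a] swp_append[OF lp assms(2)] a assms(2) by simp
  have second: "pre @ x' # y' # z' # post \<in> Bs \<Longrightarrow> pre @ x' # z' # y' # post \<in> Bs" for x' y' z'
    using swp_in_Bs[of "pre @ x' # y' # z' # post" "Suc a"] swp_append_second[OF lp assms(2)] assms(3)
    by simp
  show ?thesis
    by (rule that[OF i lp]) (use assms(1) i first second in blast)+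
qed

lemma word_eq_on_two_sites:
  assumes a: "1 \<le> a" "a < n"
    and local: "\<And>F pre x y post. length pre = a - 1 \<Longrightarrow> pre @ x # y # post \<in> Bs \<Longrightarrow>
       pre @ y # x # post \<in> Bs \<Longrightarrow>
       sem Bs (ocomps Bs L1) F (pre @ x # y # post) = sem Bs (ocomps Bs L2) F (pre @ x # y # post)"
  shows "word_eq L1 L2"
proof (rule word_eqI)
  fix F i assume "i \<in> Bs"
  then obtain pre x y post
    where "i = pre @ x # y # post" "length pre = a - 1" "pre @ y # x # post \<in> Bs"
    using two_site_frame a by blast
  with \<open>i \<in> Bs\<close> show "sem Bs (ocomps Bs L1) F i = sem Bs (ocomps Bs L2) F i"
    using local by blast
qed

lemma word_eq_on_three_sites:
  assumes a: "1 \<le> a" "Suc a < n"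
    and local: "\<And>F pre x y z post. length pre = a - 1 \<Longrightarrow> pre @ x # y # z # post \<in> Bs \<Longrightarrow>
       pre @ y # x # z # post \<in> Bs \<Longrightarrow> pre @ x # z # y # post \<in> Bs \<Longrightarrow>
       pre @ y # z # x # post \<in> Bs \<Longrightarrow> pre @ z # x # y # post \<in> Bs \<Longrightarrow>
       pre @ z # y # x # post \<in> Bs \<Longrightarrow>
       sem Bs (ocomps Bs L1) F (pre @ x # y # z # post) = sem Bs (ocomps Bs L2) F (pre @ x # y # z # post)"
  shows "word_eq L1 L2"
proof (rule word_eqI)
  fix F i assume "i \<in> Bs"
  then obtain pre x y z post where "i = pre @ x # y # z # post" "length pre = a - 1"
    "pre @ y # x # z # post \<in> Bs" "pre @ x # z # y # post \<in> Bs" "pre @ y # z # x # post \<in> Bs"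
    "pre @ z # x # y # post \<in> Bs" "pre @ z # y # x # post \<in> Bs"
    using three_site_frame a by blast
  with \<open>i \<in> Bs\<close> show "sem Bs (ocomps Bs L1) F i = sem Bs (ocomps Bs L2) F i"
    using local by blast
qed

text \<open>The simplifier rewrites 1 \<le> a to Suc 0 \<le> a, so the hypotheses are supplied in that
  form (assms[simplified]) for the side conditions of the conditional rules below to be
  discharged.\<close>

lemmas local_sem = sem_Cons sem_Nil sem_oadd sem_osmult sem_op_id[OF finite_Bs] restrict_to_def
  sem_T_op sem_S_op sem_Tinv sem_diag_op colour_rise_def
  swp_append swp_append_second nth_append_sites

lemma T_quadratic:
  assumes "1 \<le> a" "a < n"
  shows "word_eq [T_at a, T_at a] [oadd (osmult qdiff (T_at a)) op_id]"
  apply (rule word_eq_on_two_sites[OF assms])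
  subgoal for F pre x y post
    using assms[simplified] by (simp del: ocomps.simps add: local_sem)
      (cases x y rule: vless_cases2; simp add: coeff_defs; simp add: coeff_arith)
  done

lemma Tinv_T_cancel:
  assumes "1 \<le> a" "a < n"
  shows "word_eq [Tinv a, T_at a] []"
  apply (rule word_eq_on_two_sites[OF assms])
  subgoal for F pre x y post
    using assms[simplified] by (simp del: ocomps.simps add: local_sem)
      (cases x y rule: vless_cases2; simp add: coeff_defs; simp add: coeff_arith)
  done

lemma T_Tinv_cancel:
  assumes "1 \<le> a" "a < n"
  shows "word_eq [T_at a, Tinv a] []"
  apply (rule word_eq_on_two_sites[OF assms])
  subgoal for F pre x y post
    using assms[simplified] by (simp del: ocomps.simps add: local_sem)
      (cases x y rule: vless_cases2; simp add: coeff_defs; simp add: coeff_arith)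
  done

lemma Tinv_S:
  assumes "1 \<le> a" "a < n"
  shows "word_eq [Tinv a, S_at a] [oadd op_id (osmult (- qdiff) (ocomps Bs [S_at a, colour_rise a]))]"
  apply (rule word_eq_on_two_sites[OF assms])
  subgoal for F pre x y post
    using assms[simplified] by (simp del: ocomps.simps add: local_sem)
      (cases x y rule: vless_cases2; simp add: coeff_defs; simp add: coeff_arith)
  done

lemma T_commutes_S_squared:
  assumes "1 \<le> a" "a < n"
  shows "word_eq [T_at a, S_at a, S_at a] [S_at a, S_at a, T_at a]"
  apply (rule word_eq_on_two_sites[OF assms])
  subgoal for F pre x y post
    using assms[simplified] by (simp del: ocomps.simps add: local_sem)
      (cases x y rule: vless_cases2; simp add: coeff_defs; simp add: coeff_arith)
  done

lemma T_braid:
  assumes "1 \<le> a" "Suc a < n"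
  shows "word_eq [T_at a, T_at (Suc a), T_at a] [T_at (Suc a), T_at a, T_at (Suc a)]"
  apply (rule word_eq_on_three_sites[OF assms])
  subgoal for F pre x y z post
    using assms[simplified] Suc_lessD[OF assms(2)] by (simp del: ocomps.simps add: local_sem)
      (cases x y z rule: vless_cases3; simp add: coeff_defs; simp add: coeff_arith)
  done

lemma S_braid:
  assumes "1 \<le> a" "Suc a < n"
  shows "word_eq [S_at a, S_at (Suc a), S_at a] [S_at (Suc a), S_at a, S_at (Suc a)]"
  apply (rule word_eq_on_three_sites[OF assms])
  subgoal for F pre x y z post
    using assms[simplified] Suc_lessD[OF assms(2)] by (simp del: ocomps.simps add: local_sem)
      (cases x y z rule: vless_cases3; simp add: coeff_defs; simp add: coeff_arith)
  done

lemma T_S_S_shift_up: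
  assumes "1 \<le> a" "Suc a < n"
  shows "word_eq [T_at a, S_at (Suc a), S_at a] [S_at (Suc a), S_at a, T_at (Suc a)]"
  apply (rule word_eq_on_three_sites[OF assms])
  subgoal for F pre x y z post
    using assms[simplified] Suc_lessD[OF assms(2)] by (simp del: ocomps.simps add: local_sem)
      (cases x y z rule: vless_cases3; simp add: coeff_defs; simp add: coeff_arith)
  done

lemma T_S_S_shift_down:
  assumes "1 \<le> a" "Suc a < n"
  shows "word_eq [T_at (Suc a), S_at a, S_at (Suc a)] [S_at a, S_at (Suc a), T_at a]"
  apply (rule word_eq_on_three_sites[OF assms])
  subgoal for F pre x y z post
    using assms[simplified] Suc_lessD[OF assms(2)] by (simp del: ocomps.simps add: local_sem)
      (cases x y z rule: vless_cases3; simp add: coeff_defs; simp add: coeff_arith)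
  done

lemma T_quadratic_oeq:
  "1 \<le> a \<Longrightarrow> a < n \<Longrightarrow> oeq Bs (ocomp Bs (T_at a) (T_at a)) (oadd (osmult qdiff (T_at a)) op_id)"
  using T_quadratic[of a] unfolding word_eq_def
  by (simp add: oeq_iff_sem_eq[OF finite_Bs] sem_ocomp_pair sem_single del: ocomps.simps)

section \<open>Operators acting on distant positions commute\<close>

definition two_term_at :: "op \<Rightarrow> nat \<Rightarrow> (idx \<Rightarrow> K) \<Rightarrow> (idx \<Rightarrow> K) \<Rightarrow> bool" where
  "two_term_at A a \<alpha> \<beta> \<longleftrightarrow> 1 \<le> a \<and> a < n \<and>
     (\<forall>F i. i \<in> Bs \<longrightarrow> sem Bs A F i = \<alpha> i * F i + \<beta> i * F (swp i a))"

definition local_at :: "op \<Rightarrow> nat \<Rightarrow> bool" where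
  "local_at A a \<longleftrightarrow> (\<exists>g h. two_term_at A a (\<lambda>i. g (i!(a-1)) (i!a)) (\<lambda>i. h (i!(a-1)) (i!a)))"

lemma local_at_two_term: "local_at A b \<Longrightarrow> \<exists>\<alpha> \<beta>. two_term_at A b \<alpha> \<beta>"
  unfolding local_at_def by blast

lemma local_at_T: "1 \<le> a \<Longrightarrow> a < n \<Longrightarrow> local_at (T_at a) a"
  unfolding local_at_def two_term_at_def
    by (rule exI[of _ "T_coeff k"], rule exI[of _ "swap_coeff k"]) (simp add: sem_T_op)

lemma local_at_S: "1 \<le> a \<Longrightarrow> a < n \<Longrightarrow> local_at (S_at a) a"
  unfolding local_at_def two_term_at_def
    by (rule exI[of _ "S_coeff k"], rule exI[of _ "swap_coeff k"]) (simp add: sem_S_op)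

lemma local_at_Tinv: "1 \<le> a \<Longrightarrow> a < n \<Longrightarrow> local_at (Tinv a) a"
  unfolding local_at_def two_term_at_def
    by (rule exI[of _ "\<lambda>x y. T_coeff k x y - qdiff"], rule exI[of _ "swap_coeff k"]) (simp add: sem_Tinv)

lemma local_at_commute_ordered:
  assumes A: "local_at A a" and B: "local_at B b" and ab: "a + 2 \<le> b"
  shows "word_eq [A, B] [B, A]"
proof -
  obtain g h where mA: "two_term_at A a (\<lambda>i. g (i!(a-1)) (i!a)) (\<lambda>i. h (i!(a-1)) (i!a))"
    using A unfolding local_at_def by blast
  obtain g' h' where mB: "two_term_at B b (\<lambda>i. g' (i!(b-1)) (i!b)) (\<lambda>i. h' (i!(b-1)) (i!b))"
    using B unfolding local_at_def by blast
  have a: "1 \<le> a" "a < n" and b: "1 \<le> b" "b < n" using mA mB by (auto simp: two_term_at_def)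
  have eA: "\<And>F i. i \<in> Bs \<Longrightarrow> sem Bs A F i = g (i!(a-1)) (i!a) * F i + h (i!(a-1)) (i!a) * F (swp i a)"
    using mA by (simp add: two_term_at_def)
  have eB: "\<And>F i. i \<in> Bs \<Longrightarrow> sem Bs B F i = g' (i!(b-1)) (i!b) * F i + h' (i!(b-1)) (i!b) * F (swp i b)"
    using mB by (simp add: two_term_at_def)
  show ?thesis
  proof (rule word_eqI)
    fix F i assume i: "i \<in> Bs"
    have ia: "swp i a \<in> Bs" and ib: "swp i b \<in> Bs" using swp_in_Bs[OF i] a b by auto
    have iab: "swp (swp i a) b \<in> Bs" using swp_in_Bs[OF ia] b by auto
    have c: "swp (swp i a) b = swp (swp i b) a" using swp_commute[OF a(1) ab] .
    have n1: "(swp i b) ! (a - Suc 0) = i ! (a - Suc 0)" "(swp i b) ! a = i ! a"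
      using ab a by (auto intro!: nth_swp_other)
    have n2: "(swp i a) ! (b - Suc 0) = i ! (b - Suc 0)" "(swp i a) ! b = i ! b"
      using ab a by (auto intro!: nth_swp_other)
    show "sem Bs (ocomps Bs [A, B]) F i = sem Bs (ocomps Bs [B, A]) F i"
      apply (simp only: sem_Cons sem_Nil)
      using i ia ib iab
      apply (simp add: eA eB n1 n2 c)
      apply (simp add: algebra_simps)
      done
  qed
qed

lemma local_at_commute:
  "local_at A a \<Longrightarrow> local_at B b \<Longrightarrow> a + 2 \<le> b \<or> b + 2 \<le> a \<Longrightarrow> word_eq [A, B] [B, A]"
  using local_at_commute_ordered word_eq_sym by blast

lemma far_T_S: "1 \<le> a \<Longrightarrow> a < n \<Longrightarrow> 1 \<le> b \<Longrightarrow> b < n \<Longrightarrow> a + 2 \<le> b \<or> b + 2 \<le> a \<Longrightarrow>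
    word_eq [T_at a, S_at b] [S_at b, T_at a]"
  by (rule local_at_commute[OF local_at_T local_at_S])

lemma far_S_S: "1 \<le> a \<Longrightarrow> a < n \<Longrightarrow> 1 \<le> b \<Longrightarrow> b < n \<Longrightarrow> a + 2 \<le> b \<or> b + 2 \<le> a \<Longrightarrow>
    word_eq [S_at a, S_at b] [S_at b, S_at a]"
  by (rule local_at_commute[OF local_at_S local_at_S])

lemma far_T_Tinv: "1 \<le> a \<Longrightarrow> a < n \<Longrightarrow> 1 \<le> b \<Longrightarrow> b < n \<Longrightarrow> a + 2 \<le> b \<or> b + 2 \<le> a \<Longrightarrow>
    word_eq [T_at a, Tinv b] [Tinv b, T_at a]"
  by (rule local_at_commute[OF local_at_T local_at_Tinv])

lemma far_Tinv_Tinv: "1 \<le> a \<Longrightarrow> a < n \<Longrightarrow> 1 \<le> b \<Longrightarrow> b < n \<Longrightarrow> a + 2 \<le> b \<or> b + 2 \<le> a \<Longrightarrow>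
    word_eq [Tinv a, Tinv b] [Tinv b, Tinv a]"
  by (rule local_at_commute[OF local_at_Tinv local_at_Tinv])

lemma far_T_T: "1 \<le> a \<Longrightarrow> a < n \<Longrightarrow> 1 \<le> b \<Longrightarrow> b < n \<Longrightarrow> a + 2 \<le> b \<or> b + 2 \<le> a \<Longrightarrow>
    word_eq [T_at a, T_at b] [T_at b, T_at a]"
  by (rule local_at_commute[OF local_at_T local_at_T])

lemma diag_op_intertwine:
  assumes mA: "two_term_at A a \<alpha> \<beta>"
    and h1: "\<And>i. i \<in> Bs \<Longrightarrow> \<alpha> i \<noteq> 0 \<Longrightarrow> f i = g i"
    and h2: "\<And>i. i \<in> Bs \<Longrightarrow> \<beta> i \<noteq> 0 \<Longrightarrow> f (swp i a) = g i"
  shows "word_eq [diag_op f, A] [A, diag_op g]"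
proof (rule word_eqI)
  fix F i assume i: "i \<in> Bs"
  have a: "1 \<le> a" "a < n" using mA by (auto simp: two_term_at_def)
  have ia: "swp i a \<in> Bs" using swp_in_Bs[OF i] a by auto
  have eA: "\<And>F i. i \<in> Bs \<Longrightarrow> sem Bs A F i = \<alpha> i * F i + \<beta> i * F (swp i a)"
    using mA by (simp add: two_term_at_def)
  have e1: "\<alpha> i * (f i * F i) = g i * (\<alpha> i * F i)" using h1[OF i] by (cases "\<alpha> i = 0") auto
  have e2: "\<beta> i * (f (swp i a) * F (swp i a)) = g i * (\<beta> i * F (swp i a))" using h2[OF i]
    by (cases "\<beta> i = 0") auto
  have "sem Bs (ocomps Bs [diag_op f, A]) F i = \<alpha> i * (f i * F i) + \<beta> i * (f (swp i a) * F (swp i a))"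
    apply (simp only: sem_Cons sem_Nil)
    using i ia by (simp add: eA sem_diag_op)
  also have "\<dots> = g i * (\<alpha> i * F i + \<beta> i * F (swp i a))" unfolding e1 e2 by (simp add: distrib_left)
  also have "\<dots> = sem Bs (ocomps Bs [A, diag_op g]) F i"
    apply (simp only: sem_Cons sem_Nil)
    using i ia by (simp add: eA sem_diag_op)
  finally show "sem Bs (ocomps Bs [diag_op f, A]) F i = sem Bs (ocomps Bs [A, diag_op g]) F i" .
qed

section \<open>Moving generators through the words for T_1^{-1}...T_{n-1}^{-1} and theta\<close>

definition theta_word :: "nat \<Rightarrow> op list" where "theta_word j = map (\<lambda>a. S_at a) (rev [1..<j])"

definition Tinv_word :: "nat \<Rightarrow> op list" where "Tinv_word j = map Tinv [1..<j]"

lemma theta_word_Suc: "1 \<le> j \<Longrightarrow> theta_word (Suc j) = S_at j # theta_word j"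
  by (simp add: theta_word_def)

lemma Tinv_word_Suc: "1 \<le> j \<Longrightarrow> Tinv_word (Suc j) = Tinv_word j @ [Tinv j]"
  by (simp add: Tinv_word_def)

lemma T_T_Tinv_Tinv_cancel:
  assumes "1 \<le> a" "Suc a < n"
  shows "word_eq [T_at (Suc a), T_at a, Tinv a, Tinv (Suc a)] []"
proof -
  have "word_eq [T_at (Suc a), T_at a, Tinv a, Tinv (Suc a)] [T_at (Suc a), Tinv (Suc a)]"
    by (rule word_eq_cancel[OF T_Tinv_cancel[of a], of "[T_at (Suc a)]" "[Tinv (Suc a)]"]) (use assms in auto)
  also have "word_eq [T_at (Suc a), Tinv (Suc a)] []" using T_Tinv_cancel[of "Suc a"] assms by simp
  finally show ?thesis .
qed

lemma Tinv_Tinv_T_T_cancel: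
  assumes "1 \<le> a" "Suc a < n"
  shows "word_eq [Tinv a, Tinv (Suc a), T_at (Suc a), T_at a] []"
proof -
  have "word_eq [Tinv a, Tinv (Suc a), T_at (Suc a), T_at a] [Tinv a, T_at a]"
    by (rule word_eq_cancel[OF Tinv_T_cancel[of "Suc a"], of "[Tinv a]" "[T_at a]"]) (use assms in auto)
  also have "word_eq [Tinv a, T_at a] []" using Tinv_T_cancel[of a] assms by simp
  finally show ?thesis .
qed

lemma T_shift_Tinv_pair:
  assumes a: "1 \<le> a" "Suc a < n"
  shows "word_eq [T_at (Suc a), Tinv a, Tinv (Suc a)] [Tinv a, Tinv (Suc a), T_at a]"
proof -
  let ?X = "[Tinv a, Tinv (Suc a)]"
  have "word_eq [T_at (Suc a), Tinv a, Tinv (Suc a)]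
      (?X @ [T_at (Suc a), T_at a] @ [T_at (Suc a)] @ ?X)"
    using word_eq_replace[OF word_eq_sym[OF Tinv_Tinv_T_T_cancel[OF a]], of "[]"] by simp
  also have "word_eq \<dots> (?X @ [T_at a, T_at (Suc a), T_at a] @ ?X)"
    using word_eq_replace[OF word_eq_sym[OF T_braid[OF a]], of ?X ?X] by simp
  also have "word_eq \<dots> (?X @ [T_at a])"
    using word_eq_cancel[OF T_T_Tinv_Tinv_cancel[OF a], of "?X @ [T_at a]" "[]"] by simp
  finally show ?thesis by simp
qed

lemma Tinv_braid:
  assumes a: "1 \<le> a" "Suc a < n"
  shows "word_eq [Tinv a, Tinv (Suc a), Tinv a] [Tinv (Suc a), Tinv a, Tinv (Suc a)]"
proof -
  let ?L = "[Tinv a, Tinv (Suc a), Tinv a]" and ?R = "[Tinv (Suc a), Tinv a, Tinv (Suc a)]"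
  have cancel_R: "word_eq ([T_at (Suc a), T_at a, T_at (Suc a)] @ ?R) []"
  proof -
    have "word_eq ([T_at (Suc a), T_at a, T_at (Suc a)] @ ?R) [T_at (Suc a), T_at a, Tinv a, Tinv (Suc a)]"
      using word_eq_cancel[OF T_Tinv_cancel[of "Suc a"], of "[T_at (Suc a), T_at a]" "[Tinv a, Tinv (Suc a)]"]
        a by simp
    also have "word_eq \<dots> []" by (rule T_T_Tinv_Tinv_cancel[OF a])
    finally show ?thesis .
  qed
  have cancel_L: "word_eq (?L @ [T_at a, T_at (Suc a), T_at a]) []"
  proof -
    have "word_eq (?L @ [T_at a, T_at (Suc a), T_at a]) [Tinv a, Tinv (Suc a), T_at (Suc a), T_at a]"
      using word_eq_cancel[OF Tinv_T_cancel[of a], of "[Tinv a, Tinv (Suc a)]" "[T_at (Suc a), T_at a]"]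
        a by simp
    also have "word_eq \<dots> []" by (rule Tinv_Tinv_T_T_cancel[OF a])
    finally show ?thesis .
  qed
  have "word_eq ?L (?L @ [T_at (Suc a), T_at a, T_at (Suc a)] @ ?R)"
    using word_eq_replace[OF word_eq_sym[OF cancel_R], of ?L "[]"] by simp
  also have "word_eq \<dots> (?L @ [T_at a, T_at (Suc a), T_at a] @ ?R)"
    using word_eq_replace[OF word_eq_sym[OF T_braid[OF a]], of ?L ?R] by simp
  also have "word_eq \<dots> ?R"
    using word_eq_cancel[OF cancel_L, of "[]" ?R] by simp
  finally show ?thesis .
qed

lemma T_shift_theta:
  assumes a: "1 \<le> a" "Suc a < j" "j \<le> n"
  shows "word_eq (T_at a # theta_word j) (theta_word j @ [T_at (Suc a)])"
proof -
  define L1 where "L1 = map (\<lambda>a. S_at a) (rev [Suc (Suc a)..<j])"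
  define L3 where "L3 = map (\<lambda>a. S_at a) (rev [1..<a])"
  have th: "theta_word j = L1 @ [S_at (Suc a), S_at a] @ L3"
    unfolding theta_word_def L1_def L3_def using upt_split3[OF a(1) a(2)] by simp
  have "word_eq (T_at a # L1) (L1 @ [T_at a])"
    by (rule word_eq_move_front) (use a in \<open>auto simp: L1_def intro!: far_T_S\<close>)
  then have "word_eq (T_at a # theta_word j) (L1 @ [T_at a, S_at (Suc a), S_at a] @ L3)"
    using word_eq_appendR[of "T_at a # L1" "L1 @ [T_at a]" "[S_at (Suc a), S_at a] @ L3"] th by simp
  also have "word_eq \<dots> (L1 @ [S_at (Suc a), S_at a, T_at (Suc a)] @ L3)"
    by (rule word_eq_middle[OF T_S_S_shift_up]) (use a in auto)
  also have "word_eq \<dots> (L1 @ [S_at (Suc a), S_at a] @ L3 @ [T_at (Suc a)])"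
  proof -
    have "word_eq (T_at (Suc a) # L3) (L3 @ [T_at (Suc a)])"
      by (rule word_eq_move_front) (use a in \<open>auto simp: L3_def intro!: far_T_S\<close>)
    then show ?thesis using word_eq_appendL[of _ _ "L1 @ [S_at (Suc a), S_at a]"] by simp
  qed
  finally show ?thesis using th by simp
qed

lemma Tinv_shift_theta:
  assumes a: "1 \<le> a" "Suc a < j" "j \<le> n"
  shows "word_eq (Tinv a # theta_word j) (theta_word j @ [Tinv (Suc a)])"
proof -
  have "word_eq (Tinv a # theta_word j) (Tinv a # theta_word j @ [T_at (Suc a), Tinv (Suc a)])"
    using word_eq_replace[OF word_eq_sym[OF T_Tinv_cancel[of "Suc a"]], of "Tinv a # theta_word j" "[]"] a
    by simp
  also have "word_eq \<dots> ([Tinv a] @ (T_at a # theta_word j) @ [Tinv (Suc a)])"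
    by (rule word_eq_replace[OF word_eq_sym[OF T_shift_theta[OF a]], of "[Tinv a]" "[Tinv (Suc a)]"]) simp_all
  also have "word_eq \<dots> (theta_word j @ [Tinv (Suc a)])"
    by (rule word_eq_cancel[OF Tinv_T_cancel[of a], of "[]" "theta_word j @ [Tinv (Suc a)]"]) (use a in auto)
  finally show ?thesis .
qed

lemma T_shift_Tinv_word:
  assumes a: "1 \<le> a" "Suc a < n"
  shows "word_eq (T_at (Suc a) # Tinv_word n) (Tinv_word n @ [T_at a])"
proof -
  define L1 where "L1 = map Tinv [1..<a]"
  define L3 where "L3 = map Tinv [Suc (Suc a)..<n]"
  have xl: "Tinv_word n = L1 @ [Tinv a, Tinv (Suc a)] @ L3"
    unfolding Tinv_word_def L1_def L3_def using upt_split3[OF a(1) a(2)] by simp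
  have "word_eq (T_at (Suc a) # L1) (L1 @ [T_at (Suc a)])"
    by (rule word_eq_move_front) (use a in \<open>auto simp: L1_def intro!: far_T_Tinv\<close>)
  then have "word_eq (T_at (Suc a) # Tinv_word n) (L1 @ [T_at (Suc a), Tinv a, Tinv (Suc a)] @ L3)"
    using word_eq_appendR[of "T_at (Suc a) # L1" "L1 @ [T_at (Suc a)]" "[Tinv a, Tinv (Suc a)] @ L3"] xl by simp
  also have "word_eq \<dots> (L1 @ [Tinv a, Tinv (Suc a), T_at a] @ L3)"
    by (rule word_eq_middle[OF T_shift_Tinv_pair[OF a]])
  also have "word_eq \<dots> (L1 @ [Tinv a, Tinv (Suc a)] @ L3 @ [T_at a])"
  proof -
    have "word_eq (T_at a # L3) (L3 @ [T_at a])"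
      by (rule word_eq_move_front) (use a in \<open>auto simp: L3_def intro!: far_T_Tinv\<close>)
    then show ?thesis using word_eq_appendL[of _ _ "L1 @ [Tinv a, Tinv (Suc a)]"] by simp
  qed
  finally show ?thesis using xl by simp
qed

lemma Tinv_word_shift:
  assumes a: "1 \<le> a" "Suc a < n"
  shows "word_eq (Tinv_word n @ [Tinv a]) (Tinv (Suc a) # Tinv_word n)"
proof -
  define L1 where "L1 = map Tinv [1..<a]"
  define L3 where "L3 = map Tinv [Suc (Suc a)..<n]"
  have xl: "Tinv_word n = L1 @ [Tinv a, Tinv (Suc a)] @ L3"
    unfolding Tinv_word_def L1_def L3_def using upt_split3[OF a(1) a(2)] by simp
  have "word_eq (L3 @ [Tinv a]) (Tinv a # L3)"
    by (rule word_eq_move_back) (use a in \<open>auto simp: L3_def intro!: far_Tinv_Tinv\<close>)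
  then have "word_eq (Tinv_word n @ [Tinv a]) (L1 @ [Tinv a, Tinv (Suc a), Tinv a] @ L3)"
    using word_eq_appendL[of _ _ "L1 @ [Tinv a, Tinv (Suc a)]"] xl by simp
  also have "word_eq \<dots> (L1 @ [Tinv (Suc a), Tinv a, Tinv (Suc a)] @ L3)"
    by (rule word_eq_middle[OF Tinv_braid[OF a]])
  also have "word_eq \<dots> (Tinv (Suc a) # L1 @ [Tinv a, Tinv (Suc a)] @ L3)"
  proof -
    have h: "word_eq (L1 @ [Tinv (Suc a)]) (Tinv (Suc a) # L1)"
      by (rule word_eq_move_back) (use a in \<open>auto simp: L1_def intro!: far_Tinv_Tinv\<close>)
    show ?thesis using word_eq_appendR[OF h, of "[Tinv a, Tinv (Suc a)] @ L3"] by simp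
  qed
  finally show ?thesis using xl by simp
qed

lemma Tinv_word_shift_Tinvs:
  "j + 2 \<le> n \<Longrightarrow> word_eq (Tinv_word n @ map Tinv [1..<Suc j]) (map Tinv [2..<j + 2] @ Tinv_word n)"
proof (induction j)
  case 0 then show ?case by simp
next
  case (Suc j)
  have "word_eq (Tinv_word n @ map Tinv [1..<Suc (Suc j)])
      ((Tinv_word n @ map Tinv [1..<Suc j]) @ [Tinv (Suc j)])" by simp
  also have "word_eq \<dots> (map Tinv [2..<j + 2] @ (Tinv_word n @ [Tinv (Suc j)]))"
    using word_eq_appendR[OF Suc.IH, of "[Tinv (Suc j)]"] Suc.prems by simp
  also have "word_eq \<dots> (map Tinv [2..<j + 2] @ (Tinv (Suc (Suc j)) # Tinv_word n))"
    by (rule word_eq_appendL[OF Tinv_word_shift]) (use Suc.prems in auto)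
  also have "map Tinv [2..<j + 2] @ (Tinv (Suc (Suc j)) # Tinv_word n) = map Tinv [2..<Suc j + 2] @ Tinv_word n"
    by simp
  finally show ?case .
qed

lemma Tinvs_shift_theta:
  "(\<And>b. b \<in> set bs \<Longrightarrow> 2 \<le> b \<and> b < j) \<Longrightarrow> j \<le> n \<Longrightarrow>
    word_eq (map (\<lambda>b. Tinv (b - 1)) bs @ theta_word j) (theta_word j @ map Tinv bs)"
proof (induction bs)
  case Nil then show ?case by simp
next
  case (Cons b bs)
  have b: "2 \<le> b" "b < j" using Cons.prems by auto
  have "word_eq (Tinv (b - 1) # map (\<lambda>b. Tinv (b - 1)) bs @ theta_word j)
      (Tinv (b - 1) # theta_word j @ map Tinv bs)"
    by (rule word_eq_Cons[OF Cons.IH]) (use Cons.prems in auto)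
  also have "word_eq \<dots> ((theta_word j @ [Tinv b]) @ map Tinv bs)"
  proof -
    have e: "Suc (b - 1) = b" using b by simp
    have h: "word_eq (Tinv (b - 1) # theta_word j) (theta_word j @ [Tinv (Suc (b - 1))])"
      by (rule Tinv_shift_theta; insert b Cons.prems(2); simp)
    show ?thesis using word_eq_appendR[OF h[unfolded e], of "map Tinv bs"] by simp
  qed
  finally show ?case by simp
qed

section \<open>The relations involving T_0\<close>

lemma S0_op_diag: "S0_op = diag_op (\<lambda>i. QQ (fst (i!0)))"
  by (rule ext)+ (simp add: S0_op_def diag_op_def)

definition Q2_op :: op where "Q2_op = diag_op (\<lambda>i. QQ (fst (i!1)))"

lemma S0_commute_local:
  assumes A: "local_at A b" and b: "2 \<le> b"
  shows "word_eq [S0_op, A] [A, S0_op]"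
proof -
  obtain \<alpha> \<beta> where m: "two_term_at A b \<alpha> \<beta>" using local_at_two_term[OF A] by blast
  show ?thesis unfolding S0_op_diag
    by (rule diag_op_intertwine[OF m]) (use b in \<open>auto simp: nth_swp_other\<close>)
qed

lemma S0_S1_intertwine:
  assumes n2: "2 \<le> n"
  shows "word_eq [S0_op, S_at 1] [S_at 1, Q2_op]"
proof -
  have m: "two_term_at (S_at 1) 1 (\<lambda>i. S_coeff k (i!(1-1)) (i!1)) (\<lambda>i. swap_coeff k (i!(1-1)) (i!1))"
    unfolding two_term_at_def using n2 by (simp add: sem_S_op)
  show ?thesis unfolding S0_op_diag Q2_op_def
  proof (rule diag_op_intertwine[OF m])
    fix i assume "i \<in> Bs" "S_coeff k (i ! (1 - 1)) (i ! 1) \<noteq> 0"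
    then show "QQ (fst (i ! 0)) = QQ (fst (i ! 1))" using S_coeff_nonzero by auto
  next
    fix i assume i: "i \<in> Bs"
    have l: "length i = n" using length_Bs[OF i] .
    show "QQ (fst (swp i 1 ! 0)) = QQ (fst (i ! 1))"
      using l n2 by (simp add: swp_def nth_list_update)
  qed
qed

lemma S0_shift_theta:
  assumes j: "2 \<le> j" "j \<le> n"
  shows "word_eq (S0_op # theta_word j) (theta_word j @ [Q2_op])"
proof -
  define L1 where "L1 = map (\<lambda>a. S_at a) (rev [2..<j])"
  have th: "theta_word j = L1 @ [S_at 1]"
    unfolding theta_word_def L1_def using j upt_rec[of 1 j]
      by (simp add: upt_conv_Cons numeral_2_eq_2)
  have "word_eq (S0_op # L1) (L1 @ [S0_op])"
    by (rule word_eq_move_front) (use j in \<open>auto simp: L1_def intro!: S0_commute_local local_at_S\<close>)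
  then have "word_eq (S0_op # theta_word j) (L1 @ [S0_op, S_at 1])"
    using word_eq_appendR[of "S0_op # L1" "L1 @ [S0_op]" "[S_at 1]"] th by simp
  also have "word_eq \<dots> (L1 @ [S_at 1, Q2_op])"
    by (rule word_eq_appendL[OF S0_S1_intertwine]) (use j in auto)
  finally show ?thesis using th by simp
qed

lemma Q2_S0_commute_T1:
  assumes n2: "2 \<le> n"
  shows "word_eq [Q2_op, S0_op, T_at 1] [T_at 1, Q2_op, S0_op]"
proof -
  define h where "h = (\<lambda>i::idx. QQ (fst (i!1)) * QQ (fst (i!0)))"
  have m: "two_term_at (T_at 1) 1 (\<lambda>i. T_coeff k (i!(1-1)) (i!1)) (\<lambda>i. swap_coeff k (i!(1-1)) (i!1))"
    unfolding two_term_at_def using n2 by (simp add: sem_T_op)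
  have e: "word_eq [Q2_op, S0_op] [diag_op h]" unfolding Q2_op_def S0_op_diag h_def
    by (rule diag_op_mult)
  have "word_eq [Q2_op, S0_op, T_at 1] [diag_op h, T_at 1]"
    using word_eq_appendR[OF e, of "[T_at 1]"] by simp
  also have "word_eq \<dots> [T_at 1, diag_op h]"
  proof (rule diag_op_intertwine[OF m])
    fix i assume i: "i \<in> Bs"
    have l: "length i = n" using length_Bs[OF i] .
    show "h (swp i 1) = h i"
      using l n2 by (simp add: swp_def nth_list_update h_def)
  qed simp
  also have "word_eq \<dots> [T_at 1, Q2_op, S0_op]"
    using word_eq_appendL[OF word_eq_sym[OF e], of "[T_at 1]"] by simp
  finally show ?thesis .
qed

lemma theta_word_squared_Suc:
  assumes a: "1 \<le> a" "Suc (Suc a) \<le> n"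
  shows "word_eq (theta_word (Suc (Suc a)) @ theta_word (Suc (Suc a)))
    ([S_at a, S_at (Suc a)] @ theta_word (Suc a) @ theta_word (Suc a))"
proof -
  have th: "theta_word (Suc a) = S_at a # theta_word a"
    "theta_word (Suc (Suc a)) = S_at (Suc a) # theta_word (Suc a)"
    using theta_word_Suc a by auto
  have "word_eq (theta_word a @ [S_at (Suc a)]) (S_at (Suc a) # theta_word a)"
    by (rule word_eq_move_back) (use a in \<open>auto simp: theta_word_def intro!: far_S_S\<close>)
  then have shift: "word_eq (theta_word (Suc a) @ [S_at (Suc a)]) ([S_at a, S_at (Suc a)] @ theta_word a)"
    unfolding th using word_eq_Cons[of _ _ "S_at a"] by simp
  have "word_eq (theta_word (Suc (Suc a)) @ theta_word (Suc (Suc a)))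
      ([S_at (Suc a)] @ ([S_at a, S_at (Suc a)] @ theta_word a) @ theta_word (Suc a))"
    using word_eq_middle[OF shift, of "[S_at (Suc a)]" "theta_word (Suc a)"] th(2) by simp
  also have "word_eq \<dots> ([S_at a, S_at (Suc a), S_at a] @ theta_word a @ theta_word (Suc a))"
    using word_eq_appendR[OF word_eq_sym[OF S_braid[of a]], of "theta_word a @ theta_word (Suc a)"] a
    by simp
  finally show ?thesis using th(1) by simp
qed

lemma theta_theta_T1:
  assumes j: "2 \<le> j" "j \<le> n"
  shows "word_eq (theta_word j @ theta_word j @ [T_at 1]) (T_at (j - 1) # theta_word j @ theta_word j)"
  using j
proof (induction j rule: dec_induct)
  case base
  have "theta_word 2 = [S_at 1]" by (simp add: theta_word_def numeral_2_eq_2)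
  then show ?case using word_eq_sym[OF T_commutes_S_squared[of 1]] base by simp
next
  case (step j)
  define a where "a = j - 1"
  have ja: "j = Suc a" "1 \<le> a" "Suc (Suc a) \<le> n" using step by (auto simp: a_def)
  note sq = theta_word_squared_Suc[OF ja(2,3), folded ja(1)]
  have "word_eq (theta_word (Suc j) @ theta_word (Suc j) @ [T_at 1])
      ([S_at a, S_at j] @ (theta_word j @ theta_word j @ [T_at 1]))"
    using word_eq_appendR[OF sq, of "[T_at 1]"] by simp
  also have "word_eq \<dots> ([S_at a, S_at j] @ (T_at (j - 1) # theta_word j @ theta_word j))"
    by (rule word_eq_appendL[OF step.IH]) (use step in auto)
  also have "word_eq \<dots> ([T_at j, S_at a, S_at j] @ theta_word j @ theta_word j)"
    using word_eq_appendR[OF word_eq_sym[OF T_S_S_shift_down[of a]], of "theta_word j @ theta_word j"] ja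
    by simp
  also have "word_eq \<dots> (T_at (Suc j - 1) # theta_word (Suc j) @ theta_word (Suc j))"
    using word_eq_Cons[OF word_eq_sym[OF sq], of "T_at j"] by simp
  finally show ?case .
qed

abbreviation "theta_S0 \<equiv> theta_word n @ [S0_op]"

lemma theta_S0_twice_T1:
  assumes n2: "2 \<le> n"
  shows "word_eq (theta_S0 @ theta_S0 @ [T_at 1]) (T_at (n - 1) # theta_S0 @ theta_S0)"
proof -
  have YY: "word_eq (theta_S0 @ theta_S0) (theta_word n @ theta_word n @ [Q2_op, S0_op])"
    using word_eq_middle[OF S0_shift_theta[OF n2 order_refl], of "theta_word n" "[S0_op]"] by simp
  have "word_eq (theta_S0 @ theta_S0 @ [T_at 1]) (theta_word n @ theta_word n @ [Q2_op, S0_op, T_at 1])"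
    using word_eq_appendR[OF YY, of "[T_at 1]"] by simp
  also have "word_eq \<dots> (theta_word n @ theta_word n @ [T_at 1, Q2_op, S0_op])"
    using word_eq_appendL[OF Q2_S0_commute_T1[OF n2], of "theta_word n @ theta_word n"] by simp
  also have "word_eq \<dots> (T_at (n - 1) # theta_word n @ theta_word n @ [Q2_op, S0_op])"
    using word_eq_appendR[OF theta_theta_T1[OF n2 order_refl], of "[Q2_op, S0_op]"] by simp
  also have "word_eq \<dots> (T_at (n - 1) # theta_S0 @ theta_S0)"
    using word_eq_Cons[OF word_eq_sym[OF YY], of "T_at (n - 1)"] by simp
  finally show ?thesis .
qed

lemma oinv_T_op:
  assumes a: "1 \<le> a" "a < n"
  shows "oinv Bs (T_at a) = Tinv a"
  unfolding oinv_def
proof (rule the_equality, goal_cases)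
  case 1
  have "sem Bs (ocomp Bs (Tinv a) (T_at a)) = sem Bs op_id"
    using Tinv_T_cancel[OF a] unfolding word_eq_def sem_ocomp_pair by simp
  moreover have "sem Bs (ocomp Bs (T_at a) (Tinv a)) = sem Bs op_id"
    using T_Tinv_cancel[OF a] unfolding word_eq_def sem_ocomp_pair by simp
  ultimately show ?case
    by (simp add: oeq_iff_sem_eq[OF finite_Bs] Tinv_def)
next
  case (2 S)
  then have left_inverse: "word_eq [S, T_at a] []"
    unfolding word_eq_def oeq_iff_sem_eq[OF finite_Bs] sem_ocomp_pair by simp
  have "word_eq [S] ([S, T_at a] @ [Tinv a])"
    using word_eq_replace[OF word_eq_sym[OF T_Tinv_cancel[OF a]], of "[S]" "[]"] by simp
  also have "word_eq \<dots> [Tinv a]"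
    using word_eq_cancel[OF left_inverse, of "[]" "[Tinv a]"] by simp
  finally have "oeq Bs S (Tinv a)"
    unfolding word_eq_def sem_single oeq_iff_sem_eq[OF finite_Bs] .
  with 2 show ?case
    by (intro ext) (auto simp: oeq_def Tinv_def)
qed

lemma T0_op_word:
  assumes n1: "1 \<le> n"
  shows "word_eq [T0] (Tinv_word n @ theta_S0)"
proof -
  have m: "map (\<lambda>a. oinv Bs (T_op k a)) [1..<n] = Tinv_word n"
    unfolding Tinv_word_def by (rule map_cong) (auto simp: oinv_T_op)
  have t: "theta_op Bs n k = ocomps Bs (theta_word n)"
    unfolding theta_op_def theta_word_def by simp
  have "word_eq [T0] (Tinv_word n @ [ocomps Bs (theta_word n), S0_op])"
    unfolding T0_op_def m t by (rule word_eq_ocomps_single)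
  also have "word_eq \<dots> (Tinv_word n @ theta_word n @ [S0_op])"
    using word_eq_middle[OF word_eq_ocomps_single[of "theta_word n"], of "Tinv_word n" "[S0_op]"]
      by simp
  finally show ?thesis by simp
qed

lemma T0_far_commute:
  assumes n1: "1 \<le> n" and b: "2 \<le> b" "b < n"
  shows "word_eq [T0, T_at b] [T_at b, T0]"
proof -
  define a where "a = b - 1"
  have ab: "b = Suc a" "1 \<le> a" "Suc a < n" using b by (auto simp: a_def)
  have "word_eq [T0, T_at b] ((Tinv_word n @ theta_S0) @ [T_at b])"
    using word_eq_appendR[OF T0_op_word[OF n1], of "[T_at b]"] by simp
  also have "word_eq \<dots> (Tinv_word n @ theta_word n @ [T_at b, S0_op])"
    using word_eq_appendL[OF S0_commute_local[OF local_at_T[of b]], of "Tinv_word n @ theta_word n"] b by simp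
  also have "word_eq \<dots> (Tinv_word n @ (T_at a # theta_word n) @ [S0_op])"
    using word_eq_middle[OF word_eq_sym[OF T_shift_theta[of a n]], of "Tinv_word n" "[S0_op]"] ab
      by simp
  also have "word_eq \<dots> ((T_at b # Tinv_word n) @ theta_word n @ [S0_op])"
    using word_eq_appendR[OF word_eq_sym[OF T_shift_Tinv_word[of a]], of "theta_word n @ [S0_op]"] ab by simp
  also have "word_eq \<dots> [T_at b, T0]"
    using word_eq_Cons[OF word_eq_sym[OF T0_op_word[OF n1]], of "T_at b"] by simp
  finally show ?thesis .
qed

lemma generators_far_commute:
  assumes "a < n" "b < n" "a + 2 \<le> b \<or> b + 2 \<le> a"
  shows "word_eq [TT Bs n k a, TT Bs n k b] [TT Bs n k b, TT Bs n k a]"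
proof -
  have "1 \<le> n" using assms by auto
  consider "a = 0" "2 \<le> b" | "b = 0" "2 \<le> a" | "1 \<le> a" "1 \<le> b"
    using assms(3) by linarith
  then show ?thesis
  proof cases
    case 1
    then show ?thesis using T0_far_commute[OF \<open>1 \<le> n\<close> _ assms(2)] by (simp add: TT_def)
  next
    case 2
    then show ?thesis using T0_far_commute[OF \<open>1 \<le> n\<close> _ assms(1)] word_eq_sym by (simp add: TT_def)
  next
    case 3
    then show ?thesis using far_T_T assms by (simp add: TT_def)
  qed
qed

lemma theta_S0_shift_Tinv:
  assumes a: "1 \<le> a" "Suc a < n"
  shows "word_eq (theta_S0 @ [Tinv (Suc a)]) (Tinv a # theta_S0)"
proof -
  have "word_eq (theta_S0 @ [Tinv (Suc a)]) (theta_word n @ [Tinv (Suc a), S0_op])"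
    using word_eq_appendL[OF S0_commute_local[OF local_at_Tinv[of "Suc a"]], of "theta_word n"] a
      by simp
  also have "word_eq \<dots> ((Tinv a # theta_word n) @ [S0_op])"
    using word_eq_appendR[OF word_eq_sym[OF Tinv_shift_theta[of a n]], of "[S0_op]"] a by simp
  finally show ?thesis by simp
qed

lemma theta_S0_shift_Tinvs:
  "(\<And>b. b \<in> set bs \<Longrightarrow> 2 \<le> b \<and> b < n) \<Longrightarrow>
    word_eq (theta_S0 @ map Tinv bs) (map (\<lambda>b. Tinv (b - 1)) bs @ theta_S0)"
proof (induction bs)
  case Nil then show ?case by simp
next
  case (Cons b bs)
  have b: "2 \<le> b" "b < n" using Cons.prems by auto
  have "word_eq (theta_S0 @ map Tinv (b # bs)) ((theta_S0 @ [Tinv b]) @ map Tinv bs)" by simp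
  also have "word_eq \<dots> ((Tinv (b - 1) # theta_S0) @ map Tinv bs)"
    using word_eq_appendR[OF theta_S0_shift_Tinv[of "b - 1"], of "map Tinv bs"] b by simp
  also have "word_eq \<dots> (Tinv (b - 1) # map (\<lambda>b. Tinv (b - 1)) bs @ theta_S0)"
    using word_eq_Cons[OF Cons.IH, of "Tinv (b - 1)"] Cons.prems by simp
  finally show ?case by simp
qed

lemma map_Tinv_pred: "map (\<lambda>b. Tinv (b - 1)) [2..<n] = map Tinv [1..<n - 1]"
proof -
  have "[2..<n] = map Suc [1..<n - 1]" by (cases n) (auto simp: map_Suc_upt numeral_2_eq_2)
  then show ?thesis by simp
qed

lemma theta_S0_T1_Tinv_word:
  assumes n2: "2 \<le> n"
  shows "word_eq (theta_S0 @ [T_at 1] @ Tinv_word n) (map Tinv [1..<n - 1] @ theta_S0)"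
proof -
  have x: "Tinv_word n = Tinv 1 # map Tinv [2..<n]" unfolding Tinv_word_def using n2
    by (simp add: upt_conv_Cons numeral_2_eq_2)
  have "word_eq (theta_S0 @ [T_at 1] @ Tinv_word n) (theta_S0 @ map Tinv [2..<n])"
    unfolding x
      by (rule word_eq_cancel[OF T_Tinv_cancel[of 1], of theta_S0 "map Tinv [2..<n]"]) (use n2 in auto)
  also have "word_eq \<dots> (map Tinv [1..<n - 1] @ theta_S0)"
    using theta_S0_shift_Tinvs[of "[2..<n]"] map_Tinv_pred by simp
  finally show ?thesis .
qed

lemma Tinv_word_T1_commute:
  assumes n2: "2 \<le> n"
  shows "word_eq (Tinv_word n @ map Tinv [1..<n - 1] @ [T_at (n - 1)])
    (T_at 1 # Tinv_word n @ map Tinv [1..<n - 1])"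
proof -
  define c' where "c' = map Tinv [1..<n - 1]"
  have cc: "word_eq (Tinv_word n @ c') (map Tinv [2..<n] @ Tinv_word n)"
    using Tinv_word_shift_Tinvs[of "n - 2"] n2 unfolding c'_def
      by (simp add: numeral_2_eq_2 Suc_diff_Suc)
  have x: "Tinv_word n = Tinv 1 # map Tinv [2..<n]" unfolding Tinv_word_def using n2
    by (simp add: upt_conv_Cons numeral_2_eq_2)
  have x2: "c' @ [Tinv (n - 1)] = Tinv_word n"
  proof -
    have "[1..<n] = [1..<n-1] @ [n-1]" using n2 by (cases n) auto
    then show ?thesis unfolding c'_def Tinv_word_def by simp
  qed
  have key: "word_eq (Tinv 1 # Tinv_word n @ c') (Tinv_word n @ c' @ [Tinv (n - 1)])"
  proof -
    have "word_eq (Tinv 1 # Tinv_word n @ c') (Tinv 1 # map Tinv [2..<n] @ Tinv_word n)"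
      by (rule word_eq_Cons[OF cc])
    also have "(Tinv 1 # map Tinv [2..<n] @ Tinv_word n) = Tinv_word n @ c' @ [Tinv (n - 1)]"
      using x x2 by simp
    finally show ?thesis .
  qed
  have "word_eq (Tinv_word n @ c' @ [T_at (n - 1)]) ([T_at 1, Tinv 1] @ Tinv_word n @ c' @ [T_at (n - 1)])"
    using word_eq_replace[OF word_eq_sym[OF T_Tinv_cancel[of 1]], of "[]" "Tinv_word n @ c' @ [T_at (n - 1)]"] n2
    by simp
  also have "word_eq \<dots> ([T_at 1] @ (Tinv_word n @ c' @ [Tinv (n - 1)]) @ [T_at (n - 1)])"
    using word_eq_middle[OF key, of "[T_at 1]" "[T_at (n - 1)]"] by simp
  also have "word_eq \<dots> (T_at 1 # Tinv_word n @ c')"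
    by (rule word_eq_cancel[OF Tinv_T_cancel[of "n - 1"], of "T_at 1 # Tinv_word n @ c'" "[]"]) (use n2 in auto)
  finally show ?thesis unfolding c'_def .
qed

lemma T0_T1_braid:
  assumes n2: "2 \<le> n"
  shows "word_eq [T0, T_at 1, T0, T_at 1] [T_at 1, T0, T_at 1, T0]"
proof -
  define c' where "c' = map Tinv [1..<n - 1]"
  have T0: "word_eq (xs @ [T0] @ ys) (xs @ (Tinv_word n @ theta_S0) @ ys)" for xs ys
    using word_eq_middle[OF T0_op_word] n2 by simp
  have sA: "word_eq (theta_S0 @ [T_at 1] @ Tinv_word n) (c' @ theta_S0)"
    using theta_S0_T1_Tinv_word[OF n2] unfolding c'_def .
  have "word_eq [T0, T_at 1, T0, T_at 1] (Tinv_word n @ theta_S0 @ [T_at 1, T0, T_at 1])"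
    using T0[of "[]" "[T_at 1, T0, T_at 1]"] by simp
  also have "word_eq \<dots> (Tinv_word n @ (theta_S0 @ [T_at 1] @ Tinv_word n) @ theta_S0 @ [T_at 1])"
    using T0[of "Tinv_word n @ theta_S0 @ [T_at 1]" "[T_at 1]"] by simp
  also have "word_eq \<dots> (Tinv_word n @ (c' @ theta_S0) @ theta_S0 @ [T_at 1])"
    by (rule word_eq_middle[OF sA])
  also have "word_eq \<dots> (Tinv_word n @ c' @ (T_at (n - 1) # theta_S0 @ theta_S0))"
    using word_eq_appendL[OF theta_S0_twice_T1[OF n2], of "Tinv_word n @ c'"] by simp
  also have "word_eq \<dots> ((T_at 1 # Tinv_word n @ c') @ theta_S0 @ theta_S0)"
    using word_eq_appendR[OF Tinv_word_T1_commute[OF n2], of "theta_S0 @ theta_S0"]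
    unfolding c'_def by simp
  also have "word_eq \<dots> ([T_at 1] @ Tinv_word n @ (theta_S0 @ [T_at 1] @ Tinv_word n) @ theta_S0)"
    using word_eq_middle[OF word_eq_sym[OF sA], of "T_at 1 # Tinv_word n" theta_S0] by simp
  also have "word_eq \<dots> ([T_at 1, T0, T_at 1] @ Tinv_word n @ theta_S0)"
    using word_eq_sym[OF T0[of "[T_at 1]" "[T_at 1] @ Tinv_word n @ theta_S0"]] by simp
  also have "word_eq \<dots> [T_at 1, T0, T_at 1, T0]"
    using word_eq_sym[OF T0[of "[T_at 1, T0, T_at 1]" "[]"]] by simp
  finally show ?thesis .
qed

section \<open>Triangularity of T_0 with respect to the first colour\<close>

text \<open>The rearrangement of tensor positions underlying theta_word j: the first entry is
  carried to position j (rotate_to_eq).\<close>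

definition rotate_to :: "nat \<Rightarrow> idx \<Rightarrow> idx" where
  "rotate_to j i = fold (\<lambda>a r. swp r a) [1..<j] i"

lemma rotate_to_Suc: "1 \<le> j \<Longrightarrow> rotate_to (Suc j) i = swp (rotate_to j i) j"
  by (simp add: rotate_to_def)

lemma rotate_to_eq:
  assumes "1 \<le> j" "j \<le> length i"
  shows "rotate_to j i = take (j - 1) (tl i) @ i ! 0 # drop j i"
  using assms
proof (induction j rule: dec_induct)
  case base
  have "i \<noteq> []" using base by auto
  then show ?case by (simp add: rotate_to_def hd_conv_nth[symmetric] drop_Suc)
next
  case (step j)
  have dj: "drop j i = i ! j # drop (Suc j) i" using step by (simp add: Cons_nth_drop_Suc)
  have tk: "take j (tl i) = take (j - 1) (tl i) @ [i ! j]"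
  proof -
    have "take (Suc (j - 1)) (tl i) = take (j - 1) (tl i) @ [tl i ! (j - 1)]"
      using step by (intro take_Suc_conv_app_nth) auto
    moreover have "tl i ! (j - 1) = i ! j" using step by (simp add: nth_tl)
    ultimately show ?thesis using step by simp
  qed
  have l: "length (take (j - 1) (tl i)) = j - 1" using step by simp
  have "rotate_to (Suc j) i = swp (take (j - 1) (tl i) @ i ! 0 # i ! j # drop (Suc j) i) j"
    using step dj by (simp add: rotate_to_Suc)
  also have "\<dots> = take (j - 1) (tl i) @ i ! j # i ! 0 # drop (Suc j) i"
    using swp_append[OF l] step by simp
  also have "\<dots> = take (Suc j - 1) (tl i) @ i ! 0 # drop (Suc j) i" using tk by simp
  finally show ?case .
qed

lemma rotate_to_nth:
  assumes "1 \<le> j" "j < length i"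
  shows "rotate_to j i ! (j - 1) = i ! 0" "rotate_to j i ! j = i ! j"
proof -
  have l: "length (take (j - 1) (tl i)) = j - 1" using assms by simp
  show "rotate_to j i ! (j - 1) = i ! 0" using assms l by (simp add: rotate_to_eq nth_append)
  have nj: "\<not> j < j - Suc 0" by simp
  have jj: "j - (j - Suc 0) = Suc 0" using assms by simp
  show "rotate_to j i ! j = i ! j" using assms l nj jj by (simp add: rotate_to_eq nth_append)
qed

lemma rotate_to_nth0:
  assumes "2 \<le> j" "j \<le> length i"
  shows "rotate_to j i ! 0 = i ! 1"
proof -
  have l: "length (take (j - 1) (tl i)) = j - 1" using assms by simp
  show ?thesis using assms l by (simp add: rotate_to_eq nth_append nth_tl)
qed

definition colour_determined :: "(idx \<Rightarrow> K) \<Rightarrow> bool" where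
  "colour_determined f \<longleftrightarrow> (\<forall>i\<in>Bs. \<forall>i'\<in>Bs. map fst i = map fst i' \<longrightarrow> f i = f i')"

lemma colour_determined_swp:
  "colour_determined f \<Longrightarrow> 1 \<le> a \<Longrightarrow> a < n \<Longrightarrow> colour_determined (\<lambda>i. f (swp i a))"
  unfolding colour_determined_def
proof (intro ballI impI)
  fix i i' assume f: "\<forall>i\<in>Bs. \<forall>i'\<in>Bs. map fst i = map fst i' \<longrightarrow> f i = f i'" and a: "1 \<le> a" "a < n"
    and i: "i \<in> Bs" "i' \<in> Bs" and e: "map fst i = map fst i'"
  have "map fst (swp i a) = map fst (swp i' a)" using map_fst_swp_cong[OF e] a length_Bs[OF i(1)]
    by simp
  then show "f (swp i a) = f (swp i' a)" using f swp_in_Bs[OF i(1) a] swp_in_Bs[OF i(2) a] by blast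
qed

lemma diag_op_S_intertwine:
  assumes f: "colour_determined f" and a: "1 \<le> a" "a < n"
  shows "word_eq [diag_op f, S_at a] [S_at a, diag_op (\<lambda>i. f (swp i a))]"
proof -
  have m: "two_term_at (S_at a) a (\<lambda>i. S_coeff k (i!(a-1)) (i!a)) (\<lambda>i. swap_coeff k (i!(a-1)) (i!a))"
    unfolding two_term_at_def using a by (simp add: sem_S_op)
  show ?thesis
  proof (rule diag_op_intertwine[OF m])
    fix i assume i: "i \<in> Bs" and c: "S_coeff k (i ! (a - 1)) (i ! a) \<noteq> 0"
    have "map fst (swp i a) = map fst i" using S_coeff_nonzero[OF c] a length_Bs[OF i]
      by (intro map_fst_swp_same) auto
    then show "f i = f (swp i a)" using f i swp_in_Bs[OF i a] unfolding colour_determined_def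
      by metis
  qed simp
qed

lemma diag_op_theta_intertwine:
  assumes "1 \<le> j" "j \<le> n"
  shows "colour_determined f \<Longrightarrow>
    word_eq (diag_op f # theta_word j) (theta_word j @ [diag_op (\<lambda>i. f (rotate_to j i))])"
  using assms
proof (induction j arbitrary: f rule: dec_induct)
  case base
  have "theta_word 1 = []" by (simp add: theta_word_def)
  moreover have "word_eq [diag_op f] [diag_op (\<lambda>i. f (rotate_to 1 i))]"
    by (rule diag_op_cong) (simp add: rotate_to_def)
  ultimately show ?case by simp
next
  case (step j)
  have j: "1 \<le> j" "j < n" using step by auto
  have "word_eq (diag_op f # theta_word (Suc j)) ([S_at j, diag_op (\<lambda>i. f (swp i j))] @ theta_word j)"
    using word_eq_appendR[OF diag_op_S_intertwine[OF step.prems(1) j], of "theta_word j"]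
      theta_word_Suc[OF j(1)] by simp
  also have "word_eq \<dots> ([S_at j] @ theta_word j @ [diag_op (\<lambda>i. f (swp (rotate_to j i) j))])"
    using word_eq_Cons[OF step.IH[OF colour_determined_swp[OF step.prems(1) j]], of "S_at j"] step
      by simp
  also have "word_eq \<dots> (theta_word (Suc j) @ [diag_op (\<lambda>i. f (rotate_to (Suc j) i))])"
    using theta_word_Suc[OF j(1)] rotate_to_Suc[OF j(1)] by simp
  finally show ?case .
qed

definition colour_rise_first :: "nat \<Rightarrow> op" where
  "colour_rise_first j = diag_op (\<lambda>i. if fst (i!0) < fst (i!j) then 1 else 0)"

lemma colour_rise_theta:
  assumes j: "1 \<le> j" "j < n"
  shows "word_eq (colour_rise j # theta_word j) (theta_word j @ [colour_rise_first j])"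
proof -
  have c: "colour_determined (\<lambda>i. if fst (i!(j-1)) < fst (i!j) then 1 else 0)"
    unfolding colour_determined_def
  proof (intro ballI impI)
    fix i i' assume i: "i \<in> Bs" "i' \<in> Bs" and e: "map fst i = map fst i'"
    have "fst (i!(j-1)) = fst (i'!(j-1))" "fst (i!j) = fst (i'!j)"
      using e length_Bs[OF i(1)] length_Bs[OF i(2)] j by (metis diff_le_self le_less_trans nth_map)+
    then show "(if fst (i!(j-1)) < fst (i!j) then 1 else 0)
      = (if fst (i'!(j-1)) < fst (i'!j) then (1::K) else 0)" by simp
  qed
  have "word_eq (colour_rise j # theta_word j)
      (theta_word j @ [diag_op (\<lambda>i. if fst (rotate_to j i!(j-1)) < fst (rotate_to j i!j) then 1 else 0)])"
    unfolding colour_rise_def by (rule diag_op_theta_intertwine[OF j(1) _ c]) (use j in simp)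
  also have "word_eq \<dots> (theta_word j @ [colour_rise_first j])"
    unfolding colour_rise_first_def
  proof (rule word_eq_appendL, rule diag_op_cong)
    fix i assume i: "i \<in> Bs"
    have l: "j < length i" using length_Bs[OF i] j by simp
    show "(if fst (rotate_to j i!(j-1)) < fst (rotate_to j i!j) then 1 else 0)
      = (if fst (i!0) < fst (i!j) then (1::K) else 0)"
      using rotate_to_nth[OF j(1) l] by simp
  qed
  finally show ?thesis .
qed

text \<open>Passing from j to j + 1
  subtracts q - q^{-1} times W_word j (sem_Z_word_Suc), whose entries strictly raise the first
  colour (W_word_nonzero).\<close>

definition Z_word :: "nat \<Rightarrow> op list" where "Z_word j = Tinv_word j @ theta_word j"

definition W_word :: "nat \<Rightarrow> op list" where
  "W_word j = theta_word (Suc j) @ map Tinv [2..<Suc j] @ [colour_rise_first j]"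

lemma Tinv_S_theta_word:
  assumes j: "1 \<le> j" "Suc j \<le> n"
  shows "word_eq (Tinv_word j @ [S_at j, colour_rise j] @ theta_word j) (W_word j)"
proof -
  have j': "j < n" using j by simp
  have "word_eq (Tinv_word j @ [S_at j, colour_rise j] @ theta_word j)
      (Tinv_word j @ [S_at j] @ theta_word j @ [colour_rise_first j])"
    using word_eq_middle[OF colour_rise_theta[OF j(1) j'], of "Tinv_word j @ [S_at j]" "[]"] by simp
  also have "\<dots> = (Tinv_word j @ theta_word (Suc j)) @ [colour_rise_first j]"
    using theta_word_Suc[OF j(1)] by simp
  also have "word_eq \<dots> ((theta_word (Suc j) @ map Tinv [2..<Suc j]) @ [colour_rise_first j])"
  proof (rule word_eq_appendR)
    have "[2..<Suc j] = map Suc [1..<j]"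
      by (simp add: map_Suc_upt numeral_2_eq_2)
    then have "map (\<lambda>b. Tinv (b - 1)) [2..<Suc j] = Tinv_word j"
      unfolding Tinv_word_def by (simp add: comp_def)
    moreover have "word_eq (map (\<lambda>b. Tinv (b - 1)) [2..<Suc j] @ theta_word (Suc j))
        (theta_word (Suc j) @ map Tinv [2..<Suc j])"
      by (rule Tinvs_shift_theta) (use j in auto)
    ultimately show "word_eq (Tinv_word j @ theta_word (Suc j)) (theta_word (Suc j) @ map Tinv [2..<Suc j])"
      by simp
  qed
  finally show ?thesis unfolding W_word_def by simp
qed

lemma sem_Z_word_Suc:
  assumes j: "1 \<le> j" "Suc j \<le> n"
  shows "sem Bs (ocomps Bs (Z_word (Suc j))) F i
    = sem Bs (ocomps Bs (Z_word j)) F i - qdiff * sem Bs (ocomps Bs (W_word j)) F i"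
proof -
  define G where "G = sem Bs (ocomps Bs (Tinv_word j)) F"
  have Z: "Z_word (Suc j) = Tinv_word j @ [Tinv j, S_at j] @ theta_word j"
    unfolding Z_word_def using Tinv_word_Suc[OF j(1)] theta_word_Suc[OF j(1)] by simp
  have "sem Bs (ocomps Bs (Z_word (Suc j))) F i
      = sem Bs (ocomps Bs (theta_word j)) (sem Bs (ocomps Bs [Tinv j, S_at j]) G) i"
    unfolding Z sem_append G_def ..
  also have "sem Bs (ocomps Bs [Tinv j, S_at j]) G
      = (\<lambda>r. restrict_to Bs G r + (- qdiff) * sem Bs (ocomps Bs [S_at j, colour_rise j]) G r)"
    using Tinv_S[of j] j unfolding word_eq_def
    by (simp add: fun_eq_iff sem_Cons sem_Nil sem_oadd sem_osmult sem_op_id finite_Bs restrict_to_def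
        del: ocomps.simps)
  also have "sem Bs (ocomps Bs (theta_word j)) \<dots> i
      = sem Bs (ocomps Bs (theta_word j)) G i
        + (- qdiff) * sem Bs (ocomps Bs (theta_word j)) (sem Bs (ocomps Bs [S_at j, colour_rise j]) G) i"
    unfolding sem_linear sem_restrict_arg ..
  also have "\<dots> = sem Bs (ocomps Bs (Z_word j)) F i
      + (- qdiff) * sem Bs (ocomps Bs (Tinv_word j @ [S_at j, colour_rise j] @ theta_word j)) F i"
    unfolding Z_word_def sem_append G_def by simp
  finally show ?thesis
    using Tinv_S_theta_word[OF j] unfolding word_eq_def by simp
qed

lemma ocomps_Cons_nonzero:
  assumes h: "ocomps Bs (A # As) i r \<noteq> 0"
  shows "\<exists>s\<in>Bs. ocomps Bs As i s \<noteq> 0 \<and> A s r \<noteq> 0"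
proof -
  have "ocomps Bs (A # As) i r = (\<Sum>s\<in>Bs. ocomps Bs As i s * A s r)" by (simp add: ocomp_def)
  then have "(\<Sum>s\<in>Bs. ocomps Bs As i s * A s r) \<noteq> 0" using h by simp
  then obtain s where "s \<in> Bs" "ocomps Bs As i s * A s r \<noteq> 0"
    using sum.not_neutral_contains_not_neutral by blast
  then show ?thesis by auto
qed

lemma ocomps_append_nonzero:
  assumes i: "i \<in> Bs" and r: "r \<in> Bs" and h: "ocomps Bs (xs @ ys) i r \<noteq> 0"
  shows "\<exists>s\<in>Bs. ocomps Bs ys i s \<noteq> 0 \<and> ocomps Bs xs s r \<noteq> 0"
proof -
  have "sem Bs (ocomps Bs (xs @ ys)) = sem Bs (ocomp Bs (ocomps Bs xs) (ocomps Bs ys))"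
    by (rule ext) (simp add: sem_append sem_ocomp)
  then have "oeq Bs (ocomps Bs (xs @ ys)) (ocomp Bs (ocomps Bs xs) (ocomps Bs ys))"
    using oeq_iff_sem_eq[OF finite_Bs] by simp
  then have "ocomp Bs (ocomps Bs xs) (ocomps Bs ys) i r \<noteq> 0" using h i r by (simp add: oeq_def)
  then show ?thesis unfolding ocomp_def by (rule sum.not_neutral_contains_not_neutral) auto
qed

lemma ocomps_Nil_nonzero: "ocomps Bs [] i r \<noteq> 0 \<Longrightarrow> r = i"
  by (simp add: op_id_def split: if_splits)

lemma ocomps_single: "i \<in> Bs \<Longrightarrow> ocomps Bs [A] i r = A i r"
proof -
  assume i: "i \<in> Bs"
  have "ocomps Bs [A] i r = (\<Sum>s\<in>Bs. if s = i then A s r else 0)"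
    by (simp add: ocomp_def op_id_def, rule sum.cong) auto
  then show ?thesis using finite_Bs i by simp
qed

lemma S_at_nonzero:
  assumes a: "1 \<le> a" "a < n" and s: "s \<in> Bs" and h: "S_at a s r \<noteq> 0"
  shows "map fst r = map fst (swp s a)"
proof (cases "r = swp s a")
  case True then show ?thesis by simp
next
  case False
  then have "r = s" "S_coeff k (s!(a-1)) (s!a) \<noteq> 0" using h
    by (auto simp: S_op_two_terms split: if_splits)
  moreover have "a < length s" using length_Bs[OF s] a by simp
  ultimately show ?thesis using map_fst_swp_same[of a s] S_coeff_nonzero a by auto
qed

lemma Tinv_nonzero:
  assumes h: "Tinv b s r \<noteq> 0"
  shows "r = swp s b \<or> (r = s \<and> fst (s!b) \<le> fst (s!(b-1)))"
proof (cases "r = swp s b")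
  case True then show ?thesis by simp
next
  case False
  then have rs: "r = s" and c: "T_coeff k (s!(b-1)) (s!b) - qdiff \<noteq> 0" using h
    by (auto simp: Tinv_def T_op_two_terms split: if_splits)
  have "\<not> vless (s!(b-1)) (s!b)" using c by (auto simp: T_coeff_def)
  then have "s!(b-1) = s!b \<or> vless (s!b) (s!(b-1))" using vless_linear by blast
  then show ?thesis using rs vless_fst[of "s!b" "s!(b-1)"] by auto
qed

lemma colour_rise_first_nonzero:
  assumes i: "i \<in> Bs" and h: "ocomps Bs [colour_rise_first j] i r \<noteq> 0"
  shows "r = i \<and> fst (i!0) < fst (i!j)"
  using h ocomps_single[OF i] by (auto simp: colour_rise_first_def diag_op_def split: if_splits)

lemma theta_word_nonzero:
  assumes j: "1 \<le> j" "j \<le> n"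
  shows "i \<in> Bs \<Longrightarrow> r \<in> Bs \<Longrightarrow> ocomps Bs (theta_word j) i r \<noteq> 0 \<Longrightarrow> map fst r = map fst (rotate_to j i)"
  using j
proof (induction j arbitrary: r rule: dec_induct)
  case base
  have "theta_word 1 = []" by (simp add: theta_word_def)
  then show ?case using base by (simp add: rotate_to_def op_id_def split: if_splits)
next
  case (step j)
  have j: "1 \<le> j" "j < n" using step by auto
  obtain s where s: "s \<in> Bs" "ocomps Bs (theta_word j) i s \<noteq> 0" "S_at j s r \<noteq> 0"
    using ocomps_Cons_nonzero[of "S_at j" "theta_word j" i r] step.prems theta_word_Suc[OF j(1)]
      by auto
  have e1: "map fst s = map fst (rotate_to j i)" using step.IH[OF step.prems(1) s(1) s(2)] j by simp
  have e2: "map fst r = map fst (swp s j)" by (rule S_at_nonzero[OF j s(1) s(3)])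
  have "map fst (swp s j) = map fst (swp (rotate_to j i) j)"
    by (rule map_fst_swp_cong[OF e1]) (use length_Bs[OF s(1)] j in simp)
  then show ?case using e2 rotate_to_Suc[OF j(1)] by simp
qed

definition colour_unitriangular :: "op \<Rightarrow> bool" where
  "colour_unitriangular M \<longleftrightarrow>
     (\<forall>i\<in>Bs. \<forall>r\<in>Bs. (r = i \<longrightarrow> M i r = 1) \<and> (r \<noteq> i \<longrightarrow> M i r \<noteq> 0 \<longrightarrow> fst (i!0) < fst (r!0)))"

lemma Tinvs_nonzero:
  assumes j: "j < n" and i: "i \<in> Bs"
  shows "a + d = Suc j \<Longrightarrow> 2 \<le> a \<Longrightarrow> r \<in> Bs \<Longrightarrow> ocomps Bs (map Tinv [a..<Suc j]) i r \<noteq> 0 \<Longrightarrow>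
    fst (i!j) \<le> fst (r!(a-1))"
proof (induction d arbitrary: a r)
  case 0
  then have "r = i" using ocomps_Nil_nonzero by simp
  then show ?case using 0 by simp
next
  case (Suc d)
  have ua: "[a..<Suc j] = a # [Suc a..<Suc j]" using Suc.prems
    by (simp add: upt_conv_Cons del: upt_Suc)
  have h': "ocomps Bs (Tinv a # map Tinv [Suc a..<Suc j]) i r \<noteq> 0"
    using Suc.prems(4) unfolding ua list.map .
  obtain s where s: "s \<in> Bs" "ocomps Bs (map Tinv [Suc a..<Suc j]) i s \<noteq> 0" "Tinv a s r \<noteq> 0"
    using ocomps_Cons_nonzero[OF h'] by blast
  have ih: "fst (i!j) \<le> fst (s!a)" using Suc.IH[of "Suc a" s] Suc.prems s by simp
  have ls: "a < length s" using length_Bs[OF s(1)] Suc.prems j by simp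
  from Tinv_nonzero[OF s(3)] show ?case
  proof
    assume "r = swp s a"
    then have "r!(a-1) = s!a" using ls Suc.prems by (simp add: nth_swp)
    then show ?thesis using ih by simp
  next
    assume "r = s \<and> fst (s!a) \<le> fst (s!(a-1))"
    then show ?thesis using ih by simp
  qed
qed

lemma W_word_nonzero:
  assumes j: "1 \<le> j" "Suc j \<le> n" and i: "i \<in> Bs" and r: "r \<in> Bs" and h: "ocomps Bs (W_word j) i r \<noteq> 0"
  shows "fst (i!0) < fst (r!0)"
proof -
  obtain s1 where s1: "s1 \<in> Bs" "ocomps Bs (map Tinv [2..<Suc j] @ [colour_rise_first j]) i s1 \<noteq> 0"
    "ocomps Bs (theta_word (Suc j)) s1 r \<noteq> 0"
    using ocomps_append_nonzero[OF i r h[unfolded W_word_def]] by blast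
  obtain s0 where s0: "s0 \<in> Bs" "ocomps Bs [colour_rise_first j] i s0 \<noteq> 0"
    "ocomps Bs (map Tinv [2..<Suc j]) s0 s1 \<noteq> 0"
    using ocomps_append_nonzero[OF i s1(1) s1(2)] by blast
  have p: "s0 = i" "fst (i!0) < fst (i!j)" using colour_rise_first_nonzero[OF i s0(2)] by auto
  have x: "fst (i!j) \<le> fst (s1!1)"
    using Tinvs_nonzero[OF _ i, of j 2 "j - 1" s1] s0(3) p(1) s1(1) j by simp
  have t: "map fst r = map fst (rotate_to (Suc j) s1)"
    by (rule theta_word_nonzero[OF _ j(2) s1(1) r s1(3)]) simp
  have l: "Suc j \<le> length s1" using length_Bs[OF s1(1)] j by simp
  have "fst (r!0) = fst (rotate_to (Suc j) s1 ! 0)"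
  proof -
    have "0 < length r" using length_Bs[OF r] j by simp
    then show ?thesis using t by (metis length_map nth_map)
  qed
  also have "\<dots> = fst (s1!1)" using rotate_to_nth0[of "Suc j" s1] l j by simp
  finally show ?thesis using p x by simp
qed

lemma Z_word_unitriangular:
  assumes "1 \<le> j" "j \<le> n"
  shows "colour_unitriangular (ocomps Bs (Z_word j))"
  using assms
proof (induction j rule: dec_induct)
  case base
  have "Z_word 1 = []" by (simp add: Z_word_def Tinv_word_def theta_word_def)
  then show ?case by (simp add: colour_unitriangular_def op_id_def)
next
  case (step j)
  have j: "1 \<le> j" "Suc j \<le> n" using step by auto
  have e: "\<And>i r. i \<in> Bs \<Longrightarrow> r \<in> Bs \<Longrightarrow>
      ocomps Bs (Z_word (Suc j)) i r = ocomps Bs (Z_word j) i r - qdiff * ocomps Bs (W_word j) i r"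
  proof -
    fix i r assume i: "i \<in> Bs" and r: "r \<in> Bs"
    show "ocomps Bs (Z_word (Suc j)) i r = ocomps Bs (Z_word j) i r - qdiff * ocomps Bs (W_word j) i r"
      using sem_Z_word_Suc[OF j, where F = "\<lambda>s. if s = r then 1 else 0" and i = i]
        sem_unit_vector[OF finite_Bs i r] by simp
  qed
  have IH: "colour_unitriangular (ocomps Bs (Z_word j))" using step by simp
  show ?case unfolding colour_unitriangular_def
  proof (intro ballI conjI impI)
    fix i r assume i: "i \<in> Bs" and r: "r \<in> Bs"
    {
      assume ri: "r = i"
      have "ocomps Bs (W_word j) i i = 0" using W_word_nonzero[OF j i i] by auto
      then show "ocomps Bs (Z_word (Suc j)) i r = 1" using e[OF i r] IH i ri
        by (simp add: colour_unitriangular_def)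
    }
    {
      assume ri: "r \<noteq> i" and nz: "ocomps Bs (Z_word (Suc j)) i r \<noteq> 0"
      then have "ocomps Bs (Z_word j) i r \<noteq> 0 \<or> ocomps Bs (W_word j) i r \<noteq> 0" using e[OF i r]
        by auto
      then show "fst (i!0) < fst (r!0)"
        using IH i r ri W_word_nonzero[OF j i r] by (auto simp: colour_unitriangular_def)
    }
  qed
qed

lemma T0_op_entry:
  assumes n1: "1 \<le> n" and i: "i \<in> Bs" and r: "r \<in> Bs"
  shows "T0 i r = QQ (fst (i!0)) * ocomps Bs (Z_word n) i r"
proof -
  have "T0 i r = ocomps Bs [T0] i r" using ocomps_single[OF i] by simp
  also have "\<dots> = ocomps Bs (Z_word n @ [S0_op]) i r"
    using word_eq_entry[OF T0_op_word[OF n1] i r] by (simp add: Z_word_def)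
  also have "\<dots> = sem Bs (ocomps Bs (Z_word n @ [S0_op])) (\<lambda>s. if s = r then 1 else 0) i"
    using sem_unit_vector[OF finite_Bs i r] by simp
  also have "\<dots> = QQ (fst (i!0)) * sem Bs (ocomps Bs (Z_word n)) (\<lambda>s. if s = r then 1 else 0) i"
    unfolding sem_append using i
      by (simp add: sem_Cons sem_Nil S0_op_diag sem_diag_op del: ocomps.simps)
  also have "\<dots> = QQ (fst (i!0)) * ocomps Bs (Z_word n) i r"
    using sem_unit_vector[OF finite_Bs i r] by simp
  finally show ?thesis .
qed

end

section \<open>The cyclotomic relation\<close>

locale coloured_basis = swap_closed +
  fixes m :: nat
  assumes first_colour_bounds: "i \<in> Bs \<Longrightarrow> 1 \<le> fst (i!0) \<and> fst (i!0) \<le> m"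
    and n_pos: "1 \<le> n"
begin

definition T0_minus :: "nat \<Rightarrow> op" where
  "T0_minus c = oadd T0 (osmult (- QQ c) op_id)"

lemma T0_minus_entry: "T0_minus c t r = T0 t r - QQ c * (if t = r then 1 else 0)"
  by (simp add: T0_minus_def oadd_def osmult_def op_id_def)

lemma T0_minus_product_nonzero:
  "s \<le> m \<Longrightarrow> i \<in> Bs \<Longrightarrow> r \<in> Bs \<Longrightarrow> ocomps Bs (map T0_minus (rev [1..<Suc s])) i r \<noteq> 0 \<Longrightarrow>
    s < fst (r!0)"
proof (induction s arbitrary: r)
  case 0
  then have "r = i" using ocomps_Nil_nonzero by simp
  then show ?case using first_colour_bounds[OF 0(2)] by simp
next
  case (Suc s)
  have h: "ocomps Bs (T0_minus (Suc s) # map T0_minus (rev [1..<Suc s])) i r \<noteq> 0"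
    using Suc.prems by simp
  obtain t where t: "t \<in> Bs" "ocomps Bs (map T0_minus (rev [1..<Suc s])) i t \<noteq> 0"
    "T0_minus (Suc s) t r \<noteq> 0"
    using ocomps_Cons_nonzero[OF h] by blast
  have st: "s < fst (t!0)" using Suc.IH[OF _ Suc.prems(2) t(1) t(2)] Suc.prems by simp
  have tri: "colour_unitriangular (ocomps Bs (Z_word n))"
    using Z_word_unitriangular[OF n_pos order_refl] .
  show ?case
  proof (cases "r = t")
    case True
    have "ocomps Bs (Z_word n) t t = 1" using tri t(1) by (simp add: colour_unitriangular_def)
    then have "QQ (fst (t!0)) - QQ (Suc s) \<noteq> 0"
      using t(3) True by (simp add: T0_minus_entry T0_op_entry[OF n_pos t(1) t(1)])
    then have "fst (t!0) \<noteq> Suc s" by auto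
    then show ?thesis using st True by simp
  next
    case False
    then have "T0 t r \<noteq> 0" using t(3) by (simp add: T0_minus_entry)
    then have "ocomps Bs (Z_word n) t r \<noteq> 0" using T0_op_entry[OF n_pos t(1) Suc.prems(3)] by auto
    then have "fst (t!0) < fst (r!0)" using tri t(1) Suc.prems(3) False
      by (auto simp: colour_unitriangular_def)
    then show ?thesis using st by simp
  qed
qed

lemma T0_cyclotomic:
  "oeq Bs (ocomps Bs (map (\<lambda>c. oadd T0 (osmult (- QQ c) op_id)) [1..<m+1])) (\<lambda>_ _. 0)"
proof -
  have e: "map (\<lambda>c. oadd T0 (osmult (- QQ c) op_id)) [1..<m+1] = map T0_minus [1..<Suc m]"
    by (simp add: T0_minus_def)
  have q: "word_eq (map T0_minus [1..<Suc m]) (rev (map T0_minus [1..<Suc m]))"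
    by (rule word_eq_rev) (auto simp: T0_minus_def intro: shifted_ops_commute)
  show ?thesis unfolding e oeq_def
  proof (intro ballI)
    fix i r assume i: "i \<in> Bs" and r: "r \<in> Bs"
    have "ocomps Bs (map T0_minus [1..<Suc m]) i r = ocomps Bs (map T0_minus (rev [1..<Suc m])) i r"
      using word_eq_entry[OF q i r] by (simp add: rev_map)
    also have "\<dots> = 0"
    proof (rule ccontr)
      assume "ocomps Bs (map T0_minus (rev [1..<Suc m])) i r \<noteq> 0"
      then have "m < fst (r!0)" using T0_minus_product_nonzero[OF order_refl i r] by simp
      then show False using first_colour_bounds[OF r] by simp
    qed
    finally show "ocomps Bs (map T0_minus [1..<Suc m]) i r = 0" .
  qed
qed

end

lemma finite_basis: "finite (basis m n k l)"
proof -
  define V where "V = (SIGMA c:{1..m}. {1..k c + l c})"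
  have fV: "finite V" unfolding V_def by auto
  have "basis m n k l \<subseteq> {xs. set xs \<subseteq> V \<and> length xs = n}"
    unfolding basis_def V_def by auto
  moreover have "finite {xs. set xs \<subseteq> V \<and> length xs = n}"
    using finite_lists_length_eq[OF fV] by simp
  ultimately show ?thesis by (rule finite_subset)
qed

lemma basis_coloured_basis:
  assumes "1 \<le> n"
  shows "coloured_basis (basis m n k l) n m"
proof (unfold_locales)
  show "finite (basis m n k l)" by (rule finite_basis)
  show "\<And>i. i \<in> basis m n k l \<Longrightarrow> length i = n" by (simp add: basis_def)
  show "\<And>i a. i \<in> basis m n k l \<Longrightarrow> 1 \<le> a \<Longrightarrow> a < n \<Longrightarrow> swp i a \<in> basis m n k l"
  proof -
    fix i a assume i: "i \<in> basis m n k l" and a: "1 \<le> a" "a < n"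
    have l: "length i = n" using i by (simp add: basis_def)
    have "set (swp i a) \<subseteq> set i" using set_swp[of a i] a l by simp
    moreover have "length (swp i a) = length i" by (simp add: swp_def)
    ultimately show "swp i a \<in> basis m n k l" using i l by (auto simp: basis_def)
  qed
  show "\<And>i. i \<in> basis m n k l \<Longrightarrow> 1 \<le> fst (i!0) \<and> fst (i!0) \<le> m"
  proof -
    fix i assume i: "i \<in> basis m n k l"
    have "i!0 \<in> set i" using i assms by (simp add: basis_def)
    then show "1 \<le> fst (i!0) \<and> fst (i!0) \<le> m" using i by (auto simp: basis_def)
  qed
  show "1 \<le> n" by (rule assms)
qed

theorem mainTheorem1:
  fixes m n :: nat and k l :: "nat \<Rightarrow> nat"
  assumes "1 \<le> m" and "1 \<le> n" and "(\<Sum>c\<in>{1..m}. k c + l c) > 0"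
  defines "Bs \<equiv> basis m n k l"
  defines "T \<equiv> TT Bs n k"
  shows
    \<comment> \<open>(g_0 - Q_1) ... (g_0 - Q_m) = 0\<close>
    "oeq Bs (ocomps Bs (map (\<lambda>c. oadd (T 0) (osmult (- QQ c) op_id)) [1..<m+1])) (\<lambda>_ _. 0)
     \<comment> \<open>g_0 g_1 g_0 g_1 = g_1 g_0 g_1 g_0\<close>
     \<and> (2 \<le> n \<longrightarrow> oeq Bs (ocomps Bs [T 0, T 1, T 0, T 1]) (ocomps Bs [T 1, T 0, T 1, T 0]))
     \<comment> \<open>g_i^2 = (q - q^{-1}) g_i + 1\<close>
     \<and> (\<forall>a\<in>{1..n-1}. oeq Bs (ocomp Bs (T a) (T a))
                         (oadd (osmult (qq - inverse qq) (T a)) op_id))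
     \<comment> \<open>far commutation\<close>
     \<and> (\<forall>a\<in>{0..n-1}. \<forall>b\<in>{0..n-1}. (a + 2 \<le> b \<or> b + 2 \<le> a) \<longrightarrow>
           oeq Bs (ocomp Bs (T a) (T b)) (ocomp Bs (T b) (T a)))
     \<comment> \<open>braid relation\<close>
     \<and> (\<forall>a\<in>{1..n-2}. oeq Bs (ocomps Bs [T a, T (a+1), T a]) (ocomps Bs [T (a+1), T a, T (a+1)]))"
proof -
  interpret coloured_basis Bs n k m
    unfolding Bs_def by (rule basis_coloured_basis[OF assms(2)])
  have T0: "T 0 = T0_op Bs n k" and T: "\<And>a. a \<noteq> 0 \<Longrightarrow> T a = T_op k a"
    by (simp_all add: T_def TT_def)
  have "2 \<le> n \<longrightarrow> oeq Bs (ocomps Bs [T 0, T 1, T 0, T 1]) (ocomps Bs [T 1, T 0, T 1, T 0])"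
    using word_eq_oeq[OF T0_T1_braid] by (simp add: T0 T del: ocomps.simps)
  moreover have "\<forall>a\<in>{1..n-1}. oeq Bs (ocomp Bs (T a) (T a)) (oadd (osmult (qq - inverse qq) (T a)) op_id)"
    using T_quadratic_oeq by (auto simp: T qdiff_def)
  moreover have "\<forall>a\<in>{0..n-1}. \<forall>b\<in>{0..n-1}. (a + 2 \<le> b \<or> b + 2 \<le> a) \<longrightarrow>
      oeq Bs (ocomp Bs (T a) (T b)) (ocomp Bs (T b) (T a))"
    using generators_far_commute assms(2) by (auto simp: T_def oeq_ocomp_iff_word_eq)
  moreover have "\<forall>a\<in>{1..n-2}. oeq Bs (ocomps Bs [T a, T (a+1), T a]) (ocomps Bs [T (a+1), T a, T (a+1)])"
    using word_eq_oeq[OF T_braid] by (auto simp: T simp del: ocomps.simps)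
  ultimately show ?thesis
    using T0_cyclotomic by (simp add: T0)
qed

end
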